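(* Let $\gamma=(\alpha,\beta)\in\mathbb N_0^{2n}$ with $\alpha\ge\beta$, and let $y_\pm^{(\ell)}$ be the Commutator Chain of Type II generated by $g_+^\gamma,g_-^\gamma$. Suppose that at least one of the following holds: (a) there is an index $k$ with $\alpha_k+\beta_k\ge2$ and $\alpha_k\neq\beta_k$; (b) there are two distinct indices $k,k'$ with $\alpha_k+\beta_k=\alpha_{k'}+\beta_{k'}=1$. Then for all $\ell\ge0$ and $\sigma\in\{+,-\}$, $\deg(y_\sigma^{(\ell)})=3^\ell(|\gamma|-2)+2$.
   Context: Fix $n\ge 1$. The Weyl algebra $A_n$ is the unital associative $\mathbb{C}$-algebra generated by $a_1,\dots,a_n,a_1^\dagger,\dots,a_n^\dagger$ subject to $[a_i,a_j^\dagger]=\delta_{ij}$ and $[a_i,a_j]=[a_i^\dagger,a_j^\dagger]=0$. For $\gamma=(\alpha,\beta)\in\mathbb N_0^{2n}$ set $a^{\gamma}=(a_1^\dagger)^{\alpha_1}\cdots(a_n^\dagger)^{\alpha_n}a_1^{\beta_1}\cdots a_n^{\beta_n}$; these form a $\mathbb C$-basis; $|\gamma|=\sum_j\alpha_j+\sum_j\beta_j$. For $0\neq g\in A_n$, $\deg(g)$ is the largest $|\gamma|$ with $a^\gamma$ having nonzero coefficient in $g$; $\deg(0)=-\infty$. $\dagger$ is the conjugate-linear anti-automorphism with $(a_j)^\dagger=a_j^\dagger$, $(a_j^\dagger)^\dagger=a_j$. $g_+^\gamma=i((a^\gamma)^\dagger+a^\gamma)$, $g_-^\gamma=(a^\gamma)^\dagger-a^\gamma$.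 The order on $\mathbb N_0^n$ is lexicographic. Commutator Chain of Type II generated by $g_+^\gamma,g_-^\gamma$: $y_\sigma^{(0)}=g_\sigma^\gamma$ for $\sigma\in\{+,-\}$, and $y_\sigma^{(\ell+1)}=[y_\sigma^{(\ell)},[y_+^{(\ell)},y_-^{(\ell)}]]$ for $\ell\ge0$. *)

theory Defs
  imports Complex_Main "HOL-Library.Extended_Real"
begin

text \<open>Concrete model of the Weyl algebra via its normal-ordered (PBW) basis.
  A multi-index is a function nat => nat (index j stands for mode j+1);
  a monomial (alpha, beta) stands for the normal-ordered word
  (a_1^dagger)^alpha_1 ... (a_n^dagger)^alpha_n a_1^beta_1 ... a_n^beta_n.
  An element of the algebra is its coefficient function (finite support).\<close>

type_synonym midx = "nat \<Rightarrow> nat"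
type_synonym mono = "midx \<times> midx"
type_synonym weyl = "mono \<Rightarrow> complex"

definition wsupp :: "weyl \<Rightarrow> mono set" where
  "wsupp f = {m. f m \<noteq> 0}"

text \<open>Normal ordering constant: a^b (a^dagger)^a' =
  sum_k prod_j k_j! C(b_j,k_j) C(a'_j,k_j) (a^dagger)^(a'-k) a^(b-k).\<close>
definition nc_coeff :: "midx \<Rightarrow> midx \<Rightarrow> midx \<Rightarrow> nat" where
  "nc_coeff b a' k = (\<Prod>j\<in>{j. k j \<noteq> 0}. fact (k j) * (b j choose k j) * (a' j choose k j))"

definition wmult :: "weyl \<Rightarrow> weyl \<Rightarrow> weyl" where
  "wmult f g = (\<lambda>m. \<Sum>m1\<in>wsupp f. \<Sum>m2\<in>wsupp g.
      \<Sum>k\<in>{k. \<forall>j. k j \<le> min (snd m1 j) (fst m2 j)}.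
        if m = (\<lambda>j. fst m1 j + fst m2 j - k j, \<lambda>j. snd m1 j + snd m2 j - k j)
        then f m1 * g m2 * of_nat (nc_coeff (snd m1) (fst m2) k) else 0)"

definition wcomm :: "weyl \<Rightarrow> weyl \<Rightarrow> weyl" where
  "wcomm f g = (\<lambda>m. wmult f g m - wmult g f m)"

text \<open>The conjugate-linear anti-automorphism dagger: it maps the basis word
  (a^dagger)^alpha a^beta to (a^dagger)^beta a^alpha.\<close>
definition wdagger :: "weyl \<Rightarrow> weyl" where
  "wdagger f = (\<lambda>(a, b). cnj (f (b, a)))"

definition wbasis :: "mono \<Rightarrow> weyl" where
  "wbasis m = (\<lambda>m'. if m' = m then 1 else 0)"

definition gplus :: "mono \<Rightarrow> weyl" where
  "gplus m = (\<lambda>x. \<i> * (wdagger (wbasis m) x + wbasis m x))"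

definition gminus :: "mono \<Rightarrow> weyl" where
  "gminus m = (\<lambda>x. wdagger (wbasis m) x - wbasis m x)"

definition mono_deg :: "mono \<Rightarrow> nat" where
  "mono_deg m = (\<Sum>j\<in>{j. fst m j \<noteq> 0}. fst m j) + (\<Sum>j\<in>{j. snd m j \<noteq> 0}. snd m j)"

definition wdeg :: "weyl \<Rightarrow> ereal" where
  "wdeg f = (if f = (\<lambda>_. 0) then -\<infinity> else ereal (real (Max (mono_deg ` wsupp f))))"

text \<open>Commutator chain of type II: component 1 is y_+, component 2 is y_-.\<close>
fun chain2 :: "weyl \<Rightarrow> weyl \<Rightarrow> nat \<Rightarrow> weyl \<times> weyl" where
  "chain2 p q 0 = (p, q)"
| "chain2 p q (Suc l) =
     (let (yp, ym) = chain2 p q l; c = wcomm yp ym in (wcomm yp c, wcomm ym c))"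

definition lex_ge :: "nat \<Rightarrow> midx \<Rightarrow> midx \<Rightarrow> bool" where
  "lex_ge n a b \<longleftrightarrow> (\<forall>j<n. a j = b j) \<or>
     (\<exists>k<n. (\<forall>j<k. a j = b j) \<and> a k > b k)"

end

theory Submission
  imports Defs "HOL-Library.FuncSet" "HOL-Computational_Algebra.Polynomial"
begin

text \<open>Normal-ordering a commutator [f, g] of elements of degrees d1 and d2 leaves only
  terms of degree at most d1 + d2 - 2, and the part of exact degree d1 + d2 - 2 comes from single
  contractions of the top-degree parts: it is their Poisson bracket. Writing g_+ = i(S + T) and
  g_- = T - S, where S and T are the basis words of (\<alpha>, \<beta>) and (\<beta>, \<alpha>), the leading parts of
  y_+ and y_- at level l are therefore i(A + B) and B - A, where A, B start at S, T and evolve by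
  C = 2i{A, B}, A' = {A, C}, B' = {B, C}; the degree evolves by d' = 3d - 4.

  It remains to see that these leading parts never vanish. Every word of A has the shape
  (xp + c, xm + c) and every word of B the shape (xm + c, xp + c), where xp and xm are the
  positive and negative parts of \<alpha> - \<beta>; as \<alpha> \<noteq> \<beta> the two supports are disjoint. The linear map
  sending such a word to the polynomial \<Prod>j. (1 + \<delta> j t)^(c j), with \<delta> = \<alpha> - \<beta>, turns the
  brackets into derivatives: if F, G are the images of A, B and H = Q F G with
  Q = \<Prod>j. (1 + \<delta> j t)^(xp j + xm j), then C, A', B' map to -2i H', 2i F H'', -2i G H''.
  Hypothesis (a) or (b) says deg H \<ge> 2 at the start, and then deg H never decreases, so none
  of these images vanishes.\<close>

section \<open>Normal ordering and contractions\<close>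

definition monos_below :: "nat \<Rightarrow> mono set" where
  "monos_below n = {m. \<forall>j\<ge>n. fst m j = 0 \<and> snd m j = 0}"
definition supported :: "nat \<Rightarrow> weyl \<Rightarrow> bool" where
  "supported n f \<longleftrightarrow> finite (wsupp f) \<and> wsupp f \<subseteq> monos_below n"
definition deg_le :: "nat \<Rightarrow> weyl \<Rightarrow> bool" where
  "deg_le d f \<longleftrightarrow> (\<forall>m\<in>wsupp f. mono_deg m \<le> d)"
definition hom_part :: "nat \<Rightarrow> weyl \<Rightarrow> weyl" where
  "hom_part d f = (\<lambda>m. if mono_deg m = d then f m else 0)"
definition unit_idx :: "nat \<Rightarrow> nat \<Rightarrow> nat" where
  "unit_idx j = (\<lambda>i. if i = j then 1 else 0)"
text \<open>The word produced by normal-ordering the product of the words m1 and m2 when k j of the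
  a_j in m1 are contracted with a_j^dagger in m2 (compare wmult_def).\<close>
definition contract :: "mono \<Rightarrow> mono \<Rightarrow> (nat \<Rightarrow> nat) \<Rightarrow> mono" where
  "contract m1 m2 k = (\<lambda>j. fst m1 j + fst m2 j - k j, \<lambda>j. snd m1 j + snd m2 j - k j)"
definition contractions :: "mono \<Rightarrow> mono \<Rightarrow> (nat \<Rightarrow> nat) set" where
  "contractions m1 m2 = {k. \<forall>j. k j \<le> min (snd m1 j) (fst m2 j)}"
definition mono_deg_below :: "nat \<Rightarrow> mono \<Rightarrow> nat" where
  "mono_deg_below n m = (\<Sum>j<n. fst m j + snd m j)"

lemma wmult_eq_contractions: "wmult f g m = (\<Sum>m1\<in>wsupp f. \<Sum>m2\<in>wsupp g. \<Sum>k\<in>contractions m1 m2.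
   if m = contract m1 m2 k then f m1 * g m2 * of_nat (nc_coeff (snd m1) (fst m2) k) else 0)"
  by (simp add: wmult_def contractions_def contract_def)

lemma mono_deg_eq_below: assumes "m \<in> monos_below n" shows "mono_deg m = mono_deg_below n m"
proof -
  have a: "(\<Sum>j\<in>{j. fst m j \<noteq> 0}. fst m j) = (\<Sum>j<n. fst m j)"
    by (rule sum.mono_neutral_left) (use assms in \<open>auto simp: monos_below_def not_less[symmetric]\<close>)
  have b: "(\<Sum>j\<in>{j. snd m j \<noteq> 0}. snd m j) = (\<Sum>j<n. snd m j)"
    by (rule sum.mono_neutral_left) (use assms in \<open>auto simp: monos_below_def not_less[symmetric]\<close>)
  show ?thesis unfolding mono_deg_def mono_deg_below_def a b by (simp add: sum.distrib)
qed

lemma finite_bounded_funs: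
  assumes "\<forall>j\<ge>n. b j = 0"
  shows "finite {k::nat\<Rightarrow>nat. \<forall>j. k j \<le> b j}"
proof -
  have "{k::nat\<Rightarrow>nat. \<forall>j. k j \<le> b j} \<subseteq> (\<lambda>f j. if j < n then f j else 0) ` (PiE {..<n} (\<lambda>j. {..b j}))"
  proof
    fix k assume k: "k \<in> {k::nat\<Rightarrow>nat. \<forall>j. k j \<le> b j}"
    have "k = (\<lambda>j. if j < n then restrict k {..<n} j else 0)"
      using k assms by (auto simp: fun_eq_iff) (metis le_zero_eq not_less)
    moreover have "restrict k {..<n} \<in> PiE {..<n} (\<lambda>j. {..b j})" using k by auto
    ultimately show "k \<in> (\<lambda>f j. if j < n then f j else 0) ` (PiE {..<n} (\<lambda>j. {..b j}))" by blast
  qed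
  moreover have "finite (PiE {..<n} (\<lambda>j. {..b j}))" by (rule finite_PiE) auto
  ultimately show ?thesis using finite_surj by blast
qed

lemma finite_contractions: assumes "m1 \<in> monos_below n" shows "finite (contractions m1 m2)"
proof -
  have "contractions m1 m2 \<subseteq> {k. \<forall>j. k j \<le> snd m1 j}" by (auto simp: contractions_def)
  moreover have "finite {k::nat\<Rightarrow>nat. \<forall>j. k j \<le> snd m1 j}"
    by (rule finite_bounded_funs[of n]) (use assms in \<open>auto simp: monos_below_def\<close>)
  ultimately show ?thesis by (rule finite_subset)
qed

lemma contractions_vanish_above: "m1 \<in> monos_below n \<Longrightarrow> k \<in> contractions m1 m2 \<Longrightarrow> j \<ge> n \<Longrightarrow> k j = 0"
  unfolding contractions_def monos_below_def
  by (metis (mono_tags, lifting) le_zero_eq mem_Collect_eq min.bounded_iff)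

lemma contract_below: "m1 \<in> monos_below n \<Longrightarrow> m2 \<in> monos_below n \<Longrightarrow> contract m1 m2 k \<in> monos_below n"
  by (auto simp: monos_below_def contract_def)

lemma mono_deg_below_contract:
  assumes "k \<in> contractions m1 m2"
  shows "mono_deg_below n (contract m1 m2 k) + 2 * (\<Sum>j<n. k j)
      = mono_deg_below n m1 + mono_deg_below n m2"
proof -
  have "\<And>j. (fst m1 j + fst m2 j - k j) + (snd m1 j + snd m2 j - k j) + 2 * k j
        = (fst m1 j + snd m1 j) + (fst m2 j + snd m2 j)"
  proof -
    fix j have "k j \<le> snd m1 j" "k j \<le> fst m2 j" using assms by (auto simp: contractions_def)
    thus "(fst m1 j + fst m2 j - k j) + (snd m1 j + snd m2 j - k j) + 2 * k j
        = (fst m1 j + snd m1 j) + (fst m2 j + snd m2 j)" by linarith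
  qed
  hence "(\<Sum>j<n. (fst m1 j + fst m2 j - k j) + (snd m1 j + snd m2 j - k j) + 2 * k j)
        = (\<Sum>j<n. (fst m1 j + snd m1 j) + (fst m2 j + snd m2 j))" by simp
  thus ?thesis by (simp add: mono_deg_below_def contract_def sum.distrib sum_distrib_left)
qed

lemma unit_idx_in_contractions_iff:
  "(unit_idx j \<in> contractions m1 m2) = (1 \<le> snd m1 j \<and> 1 \<le> fst m2 j)"
  by (auto simp: contractions_def unit_idx_def)

lemma nc_coeff_zero: "nc_coeff b a (\<lambda>_. 0) = 1"
  by (simp add: nc_coeff_def)

lemma nc_coeff_unit_idx: "nc_coeff b a (unit_idx j) = b j * a j"
proof -
  have "{i. unit_idx j i \<noteq> 0} = {j}" by (auto simp: unit_idx_def)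
  thus ?thesis by (simp add: nc_coeff_def unit_idx_def)
qed

lemma zero_in_contractions: "(\<lambda>_. 0) \<in> contractions m1 m2" by (simp add: contractions_def)

lemma inj_unit_idx: "inj unit_idx"
proof (rule injI)
  fix a b assume "unit_idx a = unit_idx b" hence "unit_idx a a = unit_idx b a" by simp
  thus "a = b" by (auto simp: unit_idx_def split: if_splits)
qed

lemma unit_idx_nonzero: "unit_idx j \<noteq> (\<lambda>_. 0)"
proof
  assume "unit_idx j = (\<lambda>_. 0)" hence "unit_idx j j = 0" by simp
  thus False by (simp add: unit_idx_def)
qed

lemma sum_eq_1_unit_idx:
  assumes "(\<Sum>j<n. k j) = 1" "\<forall>j\<ge>n. k j = 0"
  shows "\<exists>j<n. k = unit_idx j"
proof -
  from assms(1) obtain j where j: "j<n" "k j = 1" "\<forall>b<n. j \<noteq> b \<longrightarrow> k b = 0"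
    using sum_eq_1_iff[of "{..<n}" k] by auto
  have "k = unit_idx j"
  proof
    fix x show "k x = unit_idx j x"
    proof (cases "x < n")
      case True thus ?thesis using j by (cases "x = j") (auto simp: unit_idx_def)
    next
      case False thus ?thesis using assms(2) j(1) by (auto simp: unit_idx_def)
    qed
  qed
  thus ?thesis using j by blast
qed

lemma sum_eq_0_zero_fun:
  fixes k :: "nat \<Rightarrow> nat"
  assumes "(\<Sum>j<n. k j) = (0::nat)" "\<forall>j\<ge>n. k j = 0"
  shows "k = (\<lambda>_. 0)"
proof
  fix x show "k x = 0"
  proof (cases "x < n")
    case True thus ?thesis using assms(1) sum_eq_0_iff[of "{..<n}" k] by auto
  next
    case False thus ?thesis using assms(2) by simp
  qed
qed

lemma contraction_forces_single:
  assumes m1: "m1 \<in> monos_below n" and m2: "m2 \<in> monos_below n"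
    and d1: "mono_deg m1 \<le> d1" and d2: "mono_deg m2 \<le> d2" and dd: "2 \<le> d1 + d2"
    and k: "k \<in> contractions m1 m2" "k \<noteq> (\<lambda>_. 0)"
    and dm: "d1 + d2 - 2 \<le> mono_deg (contract m1 m2 k)"
  shows "(\<Sum>j<n. k j) = 1 \<and> mono_deg m1 = d1 \<and> mono_deg m2 = d2"
proof -
  have mB: "contract m1 m2 k \<in> monos_below n" by (rule contract_below[OF m1 m2])
  have "(\<Sum>j<n. k j) \<noteq> 0"
    using sum_eq_0_zero_fun[where n=n and k=k] contractions_vanish_above[OF m1 k(1)] k(2) by blast
  then show ?thesis
    using mono_deg_below_contract[OF k(1), where n=n] dm d1 d2 dd
    unfolding mono_deg_eq_below[OF m1] mono_deg_eq_below[OF m2] mono_deg_eq_below[OF mB]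
    by linarith
qed

lemma sum_contractions_single:
  fixes h :: "(nat \<Rightarrow> nat) \<Rightarrow> 'a::comm_monoid_add"
  assumes m1: "m1 \<in> monos_below n"
    and single: "\<And>k. k \<in> contractions m1 m2 \<Longrightarrow> k \<noteq> (\<lambda>_. 0) \<Longrightarrow> h k \<noteq> 0 \<Longrightarrow> (\<Sum>j<n. k j) = 1"
    and units: "\<And>j. unit_idx j \<notin> contractions m1 m2 \<Longrightarrow> h (unit_idx j) = 0"
  shows "(\<Sum>k\<in>contractions m1 m2. h k) = h (\<lambda>_. 0) + (\<Sum>j<n. h (unit_idx j))"
proof -
  let ?K = "contractions m1 m2 - {\<lambda>_. 0}" and ?U = "unit_idx ` {..<n}"
  have fK: "finite (contractions m1 m2)" by (rule finite_contractions[OF m1])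
  have "sum h ?K = sum h (?K \<inter> ?U)"
  proof (rule sum.mono_neutral_right)
    show "\<forall>k\<in>?K - ?K \<inter> ?U. h k = 0"
      using single sum_eq_1_unit_idx contractions_vanish_above[OF m1] by blast
  qed (use fK in auto)
  also have "\<dots> = sum h ?U"
    by (rule sum.mono_neutral_left) (use units unit_idx_nonzero in auto)
  also have "\<dots> = (\<Sum>j<n. h (unit_idx j))"
    by (simp add: sum.reindex inj_on_subset[OF inj_unit_idx])
  finally show ?thesis
    using sum.remove[OF fK zero_in_contractions, of h] by simp
qed

lemma contraction_sum_split:
  assumes m1: "m1 \<in> monos_below n" and m2: "m2 \<in> monos_below n"
    and d1: "mono_deg m1 \<le> d1" and d2: "mono_deg m2 \<le> d2"
    and dm: "m \<in> monos_below n \<Longrightarrow> mono_deg m \<ge> d1 + d2 - 2" and dd: "d1 + d2 \<ge> 2"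
  shows "(\<Sum>k\<in>contractions m1 m2. if m = contract m1 m2 k
      then X * of_nat (nc_coeff (snd m1) (fst m2) k) else 0) =
    (if m = contract m1 m2 (\<lambda>_. 0) then X else 0) +
    (if mono_deg m1 = d1 \<and> mono_deg m2 = d2 then
       (\<Sum>j<n. if m = contract m1 m2 (unit_idx j) then X * of_nat (snd m1 j * fst m2 j) else 0)
           else 0)"
proof -
  define h where "h k = (if m = contract m1 m2 k then X * of_nat (nc_coeff (snd m1) (fst m2) k)
      else 0)" for k
  have forced: "(\<Sum>j<n. k j) = 1 \<and> mono_deg m1 = d1 \<and> mono_deg m2 = d2"
    if "k \<in> contractions m1 m2" "k \<noteq> (\<lambda>_. 0)" "h k \<noteq> 0" for k
    using that contraction_forces_single[OF m1 m2 d1 d2 dd] dm contract_below[OF m1 m2]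
    by (auto simp: h_def split: if_splits)
  have units: "h (unit_idx j) = 0" if "unit_idx j \<notin> contractions m1 m2" for j
    using that by (auto simp: h_def nc_coeff_unit_idx unit_idx_in_contractions_iff Suc_le_eq)
  have "(\<Sum>k\<in>contractions m1 m2. h k) = h (\<lambda>_. 0) + (\<Sum>j<n. h (unit_idx j))"
    by (rule sum_contractions_single[OF m1]) (use forced units in auto)
  moreover have "h (\<lambda>_. 0) = (if m = contract m1 m2 (\<lambda>_. 0) then X else 0)"
    by (simp add: h_def nc_coeff_zero)
  moreover have "(\<Sum>j<n. h (unit_idx j)) = (if mono_deg m1 = d1 \<and> mono_deg m2 = d2 then
       (\<Sum>j<n. if m = contract m1 m2 (unit_idx j) then X * of_nat (snd m1 j * fst m2 j) else 0)
           else 0)"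
  proof (cases "mono_deg m1 = d1 \<and> mono_deg m2 = d2")
    case True
    then show ?thesis unfolding h_def nc_coeff_unit_idx by simp
  next
    case False
    then have "h (unit_idx j) = 0" for j
      using forced units unit_idx_nonzero by blast
    then show ?thesis by (subst if_not_P[OF False]) simp
  qed
  ultimately show ?thesis by (simp add: h_def)
qed

section \<open>Leading parts of commutators\<close>

text \<open>The degree-(d1 + d2 - 2) part of a product comes from the words with a single contraction;
  it is collected by single_contr, and poisson is the resulting bracket of leading parts.\<close>
definition single_contr :: "nat \<Rightarrow> weyl \<Rightarrow> weyl \<Rightarrow> weyl" where
  "single_contr n F G = (\<lambda>m. \<Sum>m1\<in>wsupp F. \<Sum>m2\<in>wsupp G. \<Sum>j<n.
      if m = contract m1 m2 (unit_idx j) then F m1 * G m2 * of_nat (snd m1 j * fst m2 j) else 0)"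
definition poisson :: "nat \<Rightarrow> weyl \<Rightarrow> weyl \<Rightarrow> weyl" where
  "poisson n F G = (\<lambda>m. single_contr n F G m - single_contr n G F m)"
lemma single_contr_superset:
  assumes "finite A" "wsupp F \<subseteq> A" "finite B" "wsupp G \<subseteq> B"
  shows "single_contr n F G m = (\<Sum>m1\<in>A. \<Sum>m2\<in>B. \<Sum>j<n.
      if m = contract m1 m2 (unit_idx j) then F m1 * G m2 * of_nat (snd m1 j * fst m2 j) else 0)"
proof -
  have i: "(\<Sum>m2\<in>wsupp G. \<Sum>j<n. if m = contract m1 m2 (unit_idx j)
      then F m1 * G m2 * of_nat (snd m1 j * fst m2 j) else 0)
     = (\<Sum>m2\<in>B. \<Sum>j<n. if m = contract m1 m2 (unit_idx j)
         then F m1 * G m2 * of_nat (snd m1 j * fst m2 j) else 0)" for m1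
  proof (rule sum.mono_neutral_left)
    show "finite B" "wsupp G \<subseteq> B" using assms by auto
    show "\<forall>i\<in>B - wsupp G.
        (\<Sum>j<n. if m = contract m1 i (unit_idx j) then F m1 * G i * of_nat (snd m1 j * fst i j)
            else 0) = 0"
    proof
      fix i assume "i \<in> B - wsupp G" hence "G i = 0" by (simp add: wsupp_def)
      thus "(\<Sum>j<n. if m = contract m1 i (unit_idx j) then F m1 * G i * of_nat (snd m1 j * fst i j)
          else 0) = 0" by (simp cong: if_cong)
    qed
  qed
  show ?thesis unfolding single_contr_def i
  proof (rule sum.mono_neutral_left)
    show "finite A" "wsupp F \<subseteq> A" using assms by auto
    show "\<forall>i\<in>A - wsupp F.
        (\<Sum>m2\<in>B. \<Sum>j<n. if m = contract i m2 (unit_idx j)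
            then F i * G m2 * of_nat (snd i j * fst m2 j) else 0) = 0"
    proof
      fix i assume "i \<in> A - wsupp F" hence "F i = 0" by (simp add: wsupp_def)
      thus "(\<Sum>m2\<in>B. \<Sum>j<n. if m = contract i m2 (unit_idx j)
          then F i * G m2 * of_nat (snd i j * fst m2 j) else 0) = 0" by (simp cong: if_cong)
    qed
  qed
qed

lemma single_contr_nonzeroD:
  assumes "single_contr n F G m \<noteq> 0"
  shows "\<exists>m1\<in>wsupp F. \<exists>m2\<in>wsupp G. \<exists>j<n. m = contract m1 m2 (unit_idx j) \<and> snd m1 j * fst m2 j \<noteq> 0"
proof (rule ccontr)
  assume "\<not> ?thesis"
  hence "\<And>m1 m2 j. m1\<in>wsupp F \<Longrightarrow> m2\<in>wsupp G \<Longrightarrow> j<n \<Longrightarrow>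
     (if m = contract m1 m2 (unit_idx j) then F m1 * G m2 * of_nat (snd m1 j * fst m2 j) else 0)
         = 0"
    by fastforce
  hence "single_contr n F G m = 0" unfolding single_contr_def by simp
  thus False using assms by simp
qed

lemma wmult_nonzeroD:
  assumes "wmult f g m \<noteq> 0"
  shows "\<exists>m1\<in>wsupp f. \<exists>m2\<in>wsupp g. \<exists>k\<in>contractions m1 m2. m = contract m1 m2 k"
proof (rule ccontr)
  assume "\<not> ?thesis"
  hence "\<And>m1 m2 k. m1\<in>wsupp f \<Longrightarrow> m2\<in>wsupp g \<Longrightarrow> k \<in> contractions m1 m2 \<Longrightarrow>
     (if m = contract m1 m2 k then f m1 * g m2 * of_nat (nc_coeff (snd m1) (fst m2) k) else 0) = 0"
    by fastforce
  hence "wmult f g m = 0" unfolding wmult_eq_contractions by simp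
  thus False using assms by simp
qed

definition wmult_range :: "weyl \<Rightarrow> weyl \<Rightarrow> mono set" where
  "wmult_range f g = (\<lambda>(m1,m2,k). contract m1 m2 k) `
      (SIGMA m1:wsupp f. SIGMA m2:wsupp g. contractions m1 m2)"

lemma finite_wmult_range: assumes "supported n f" "supported n g" shows "finite (wmult_range f g)"
  unfolding wmult_range_def
proof (rule finite_imageI, rule finite_SigmaI)
  show "finite (wsupp f)" using assms by (simp add: supported_def)
  fix m1 assume "m1 \<in> wsupp f"
  hence m1: "m1 \<in> monos_below n" using assms by (auto simp: supported_def)
  show "finite (SIGMA m2:wsupp g. contractions m1 m2)"
    by (rule finite_SigmaI) (use assms finite_contractions[OF m1] in \<open>auto simp: supported_def\<close>)
qed

lemma wsupp_wmult_range: "wsupp (wmult f g) \<subseteq> wmult_range f g"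
proof
  fix m assume "m \<in> wsupp (wmult f g)"
  hence "wmult f g m \<noteq> 0" by (simp add: wsupp_def)
  from wmult_nonzeroD[OF this] obtain m1 m2 k where "m1\<in>wsupp f" "m2\<in>wsupp g"
      "k\<in>contractions m1 m2" "m = contract m1 m2 k"
    by blast
  thus "m \<in> wmult_range f g" unfolding wmult_range_def by force
qed

lemma wmult_range_below:
  assumes "supported n f" "supported n g" shows "wmult_range f g \<subseteq> monos_below n"
  using assms contract_below by (auto simp: wmult_range_def supported_def) blast

lemma wsupp_wcomm: "wsupp (wcomm f g) \<subseteq> wmult_range f g \<union> wmult_range g f"
proof
  fix m assume "m \<in> wsupp (wcomm f g)"
  hence "wmult f g m \<noteq> 0 \<or> wmult g f m \<noteq> 0" by (auto simp: wsupp_def wcomm_def)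
  thus "m \<in> wmult_range f g \<union> wmult_range g f"
    using wsupp_wmult_range[of f g] wsupp_wmult_range[of g f]
    by (auto simp: wsupp_def)
qed

lemma supported_wcomm: assumes "supported n f" "supported n g" shows "supported n (wcomm f g)"
  unfolding supported_def
proof
  show "finite (wsupp (wcomm f g))"
    by (rule finite_subset[OF wsupp_wcomm]) (use finite_wmult_range assms in auto)
  show "wsupp (wcomm f g) \<subseteq> monos_below n" using wsupp_wcomm wmult_range_below assms by blast
qed

definition zero_contr :: "weyl \<Rightarrow> weyl \<Rightarrow> mono \<Rightarrow> complex" where
  "zero_contr f g m =
    (\<Sum>m1\<in>wsupp f. \<Sum>m2\<in>wsupp g. if m = contract m1 m2 (\<lambda>_. 0) then f m1 * g m2 else 0)"

lemma zero_contr_commute: "zero_contr f g m = zero_contr g f m"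
proof -
  have oc: "contract m1 m2 (\<lambda>_. 0) = contract m2 m1 (\<lambda>_. 0)" for m1 m2
    by (simp add: contract_def add.commute)
  have pw: "(if m = contract m1 m2 (\<lambda>_. 0) then f m1 * g m2 else 0)
      = (if m = contract m2 m1 (\<lambda>_. 0) then g m2 * f m1 else 0)" for m1 m2
    by (subst oc) (simp add: mult.commute)
  have "zero_contr f g m = (\<Sum>m1\<in>wsupp f. \<Sum>m2\<in>wsupp g. if m = contract m2 m1 (\<lambda>_. 0)
      then g m2 * f m1 else 0)"
    unfolding zero_contr_def by (simp only: pw)
  also have "\<dots> = zero_contr g f m" unfolding zero_contr_def by (rule sum.swap)
  finally show ?thesis .
qed

lemma wmult_split_top:
  assumes f: "supported n f" "deg_le d1 f" and g: "supported n g" "deg_le d2 g"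
    and dd: "d1 + d2 \<ge> 2"
    and dm: "m \<in> monos_below n \<Longrightarrow> mono_deg m \<ge> d1 + d2 - 2"
  shows "wmult f g m = zero_contr f g m + single_contr n (hom_part d1 f) (hom_part d2 g) m"
proof -
  have fS: "finite (wsupp f)" "wsupp f \<subseteq> monos_below n" using f by (auto simp: supported_def)
  have gS: "finite (wsupp g)" "wsupp g \<subseteq> monos_below n" using g by (auto simp: supported_def)
  define T where "T m1 m2 = (if mono_deg m1 = d1 \<and> mono_deg m2 = d2 then
       (\<Sum>j<n. if m = contract m1 m2 (unit_idx j) then f m1 * g m2 * of_nat (snd m1 j * fst m2 j)
           else 0) else 0)" for m1 m2
  have "wmult f g m = (\<Sum>m1\<in>wsupp f. \<Sum>m2\<in>wsupp g.
      (if m = contract m1 m2 (\<lambda>_. 0) then f m1 * g m2 else 0) + T m1 m2)"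
    unfolding wmult_eq_contractions
  proof (rule sum.cong[OF refl], rule sum.cong[OF refl])
    fix m1 m2 assume m1: "m1 \<in> wsupp f" and m2: "m2 \<in> wsupp g"
    show "(\<Sum>k\<in>contractions m1 m2. if m = contract m1 m2 k
        then f m1 * g m2 * of_nat (nc_coeff (snd m1) (fst m2) k) else 0) =
      (if m = contract m1 m2 (\<lambda>_. 0) then f m1 * g m2 else 0) + T m1 m2"
      unfolding T_def
      by (rule contraction_sum_split) (use m1 m2 fS gS f g dd dm in \<open>auto simp: deg_le_def\<close>)
  qed
  also have "\<dots> = zero_contr f g m + (\<Sum>m1\<in>wsupp f. \<Sum>m2\<in>wsupp g. T m1 m2)"
    unfolding zero_contr_def by (simp add: sum.distrib)
  also have "(\<Sum>m1\<in>wsupp f. \<Sum>m2\<in>wsupp g. T m1 m2) = single_contr n (hom_part d1 f) (hom_part d2 g) m"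
  proof -
    have "single_contr n (hom_part d1 f) (hom_part d2 g) m = (\<Sum>m1\<in>wsupp f. \<Sum>m2\<in>wsupp g. \<Sum>j<n.
      if m = contract m1 m2 (unit_idx j)
          then hom_part d1 f m1 * hom_part d2 g m2 * of_nat (snd m1 j * fst m2 j) else 0)"
      by (rule single_contr_superset) (use fS gS in \<open>auto simp: wsupp_def hom_part_def\<close>)
    also have "\<dots> = (\<Sum>m1\<in>wsupp f. \<Sum>m2\<in>wsupp g. T m1 m2)"
    proof -
      have pw: "(\<Sum>j<n. if m = contract m1 m2 (unit_idx j)
          then hom_part d1 f m1 * hom_part d2 g m2 * of_nat (snd m1 j * fst m2 j) else 0)
              = T m1 m2" for m1 m2
        by (cases "mono_deg m1 = d1 \<and> mono_deg m2 = d2")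
            (auto simp: T_def hom_part_def cong: if_cong)
      show ?thesis by (simp only: pw)
    qed
    finally show ?thesis by simp
  qed
  finally show ?thesis .
qed

lemma poisson_hom_part_supp:
  assumes f: "supported n f" and g: "supported n g"
    and "poisson n (hom_part d1 f) (hom_part d2 g) m \<noteq> 0"
  shows "m \<in> monos_below n \<and> mono_deg m = d1 + d2 - 2"
proof -
  have gen: "m \<in> monos_below n \<and> mono_deg m = d1 + d2 - 2"
    if F: "supported n F" "supported n G" "single_contr n (hom_part a F) (hom_part b G) m \<noteq> 0"
        "a + b = d1 + d2" for F G a b
  proof -
    obtain m1 m2 j where j: "m1\<in>wsupp (hom_part a F)" "m2\<in>wsupp (hom_part b G)" "j<n"
        "m = contract m1 m2 (unit_idx j)"
       "snd m1 j * fst m2 j \<noteq> 0"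
      using single_contr_nonzeroD[OF F(3)] by blast
    have B: "m1 \<in> monos_below n" "m2 \<in> monos_below n" using j F
      by (auto simp: supported_def wsupp_def hom_part_def split: if_splits)
    have dg: "mono_deg m1 = a" "mono_deg m2 = b" using j
      by (auto simp: wsupp_def hom_part_def split: if_splits)
    have K: "unit_idx j \<in> contractions m1 m2" using j(5) by (simp add: unit_idx_in_contractions_iff)
    have s: "(\<Sum>i<n. unit_idx j i) = 1" using j(3) by (simp add: unit_idx_def)
    have mB: "m \<in> monos_below n" using contract_below[OF B] j(4) by simp
    have "mono_deg_below n m + 2 = mono_deg_below n m1 + mono_deg_below n m2"
      using mono_deg_below_contract[where n=n, OF K] s j(4) by simp
    thus ?thesis using mono_deg_eq_below[OF mB] mono_deg_eq_below[OF B(1)]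
        mono_deg_eq_below[OF B(2)] dg F(4) mB by simp
  qed
  from assms(3) have "single_contr n (hom_part d1 f) (hom_part d2 g) m \<noteq> 0 \<or>
      single_contr n (hom_part d2 g) (hom_part d1 f) m \<noteq> 0"
    by (auto simp: poisson_def)
  thus ?thesis using gen[OF f g, of d1 d2] gen[OF g f, of d2 d1] by auto
qed

lemma wcomm_leading:
  assumes f: "supported n f" "deg_le d1 f" and g: "supported n g" "deg_le d2 g"
    and dd: "d1 + d2 \<ge> 2"
  shows "supported n (wcomm f g)" "deg_le (d1 + d2 - 2) (wcomm f g)"
    "hom_part (d1 + d2 - 2) (wcomm f g) = poisson n (hom_part d1 f) (hom_part d2 g)"
proof -
  show G: "supported n (wcomm f g)" using supported_wcomm f g by blast
  have eq: "wcomm f g m = poisson n (hom_part d1 f) (hom_part d2 g) m"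
    if dm: "m \<in> monos_below n \<Longrightarrow> mono_deg m \<ge> d1 + d2 - 2" for m
  proof -
    have "wmult f g m = zero_contr f g m + single_contr n (hom_part d1 f) (hom_part d2 g) m"
      by (rule wmult_split_top[OF f g dd dm])
    moreover have
      "wmult g f m = zero_contr g f m + single_contr n (hom_part d2 g) (hom_part d1 f) m"
      by (rule wmult_split_top[OF g f]) (use dd dm in auto)
    ultimately show ?thesis by (simp add: wcomm_def poisson_def zero_contr_commute[of g f])
  qed
  show "deg_le (d1 + d2 - 2) (wcomm f g)" unfolding deg_le_def
  proof
    fix m assume m: "m \<in> wsupp (wcomm f g)"
    show "mono_deg m \<le> d1 + d2 - 2"
    proof (rule ccontr)
      assume nd: "\<not> mono_deg m \<le> d1 + d2 - 2"
      hence "wcomm f g m = poisson n (hom_part d1 f) (hom_part d2 g) m" by (intro eq) simp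
      hence "poisson n (hom_part d1 f) (hom_part d2 g) m \<noteq> 0" using m by (simp add: wsupp_def)
      thus False using poisson_hom_part_supp[OF f(1) g(1)] nd by fastforce
    qed
  qed
  show "hom_part (d1 + d2 - 2) (wcomm f g) = poisson n (hom_part d1 f) (hom_part d2 g)"
  proof
    fix m
    show "hom_part (d1 + d2 - 2) (wcomm f g) m = poisson n (hom_part d1 f) (hom_part d2 g) m"
    proof (cases "mono_deg m = d1 + d2 - 2")
      case True
      thus ?thesis using eq[of m] by (simp add: hom_part_def)
    next
      case False
      hence "poisson n (hom_part d1 f) (hom_part d2 g) m = 0"
        using poisson_hom_part_supp[OF f(1) g(1)] by blast
      thus ?thesis using False by (simp add: hom_part_def)
    qed
  qed
qed

lemma wsupp_lincomb: "wsupp (\<lambda>m. a * F m + b * F' m) \<subseteq> wsupp F \<union> wsupp F'"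
  by (auto simp: wsupp_def)

lemma single_contr_linear_left:
  assumes "finite (wsupp F)" "finite (wsupp F')" "finite (wsupp G)"
  shows "single_contr n (\<lambda>m. a * F m + b * F' m) G m
      = a * single_contr n F G m + b * single_contr n F' G m"
proof -
  let ?A = "wsupp F \<union> wsupp F'"
  have fA: "finite ?A" using assms by simp
  have e1: "single_contr n (\<lambda>m. a * F m + b * F' m) G m = (\<Sum>m1\<in>?A. \<Sum>m2\<in>wsupp G. \<Sum>j<n.
      if m = contract m1 m2 (unit_idx j)
          then (a * F m1 + b * F' m1) * G m2 * of_nat (snd m1 j * fst m2 j) else 0)"
    by (rule single_contr_superset[OF fA wsupp_lincomb assms(3)]) simp
  have e2: "single_contr n F G m = (\<Sum>m1\<in>?A. \<Sum>m2\<in>wsupp G. \<Sum>j<n.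
      if m = contract m1 m2 (unit_idx j) then F m1 * G m2 * of_nat (snd m1 j * fst m2 j) else 0)"
    by (rule single_contr_superset[OF fA _ assms(3)]) auto
  have e3: "single_contr n F' G m = (\<Sum>m1\<in>?A. \<Sum>m2\<in>wsupp G. \<Sum>j<n.
      if m = contract m1 m2 (unit_idx j) then F' m1 * G m2 * of_nat (snd m1 j * fst m2 j) else 0)"
    by (rule single_contr_superset[OF fA _ assms(3)]) auto
  have pw: "(if P then (a * x + b * y) * z * c else 0)
      = a * (if P then x * z * c else 0) + b * (if P then y * z * c else 0)"
    for P and x y z c :: complex by (simp add: algebra_simps)
  show ?thesis unfolding e1 e2 e3 pw by (simp add: sum.distrib sum_distrib_left)
qed

lemma single_contr_linear_right:
  assumes "finite (wsupp F)" "finite (wsupp G)" "finite (wsupp G')"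
  shows "single_contr n F (\<lambda>m. a * G m + b * G' m) m
      = a * single_contr n F G m + b * single_contr n F G' m"
proof -
  let ?B = "wsupp G \<union> wsupp G'"
  have fB: "finite ?B" using assms by simp
  have e1: "single_contr n F (\<lambda>m. a * G m + b * G' m) m = (\<Sum>m1\<in>wsupp F. \<Sum>m2\<in>?B. \<Sum>j<n.
      if m = contract m1 m2 (unit_idx j)
          then F m1 * (a * G m2 + b * G' m2) * of_nat (snd m1 j * fst m2 j) else 0)"
    by (rule single_contr_superset[OF assms(1) _ fB wsupp_lincomb]) simp
  have e2: "single_contr n F G m = (\<Sum>m1\<in>wsupp F. \<Sum>m2\<in>?B. \<Sum>j<n.
      if m = contract m1 m2 (unit_idx j) then F m1 * G m2 * of_nat (snd m1 j * fst m2 j) else 0)"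
    by (rule single_contr_superset[OF assms(1) _ fB]) auto
  have e3: "single_contr n F G' m = (\<Sum>m1\<in>wsupp F. \<Sum>m2\<in>?B. \<Sum>j<n.
      if m = contract m1 m2 (unit_idx j) then F m1 * G' m2 * of_nat (snd m1 j * fst m2 j) else 0)"
    by (rule single_contr_superset[OF assms(1) _ fB]) auto
  have pw: "(if P then x * (a * y + b * z) * c else 0)
      = a * (if P then x * y * c else 0) + b * (if P then x * z * c else 0)"
    for P and x y z c :: complex by (simp add: algebra_simps)
  show ?thesis unfolding e1 e2 e3 pw by (simp add: sum.distrib sum_distrib_left)
qed

lemma poisson_linear_left:
  assumes "finite (wsupp F)" "finite (wsupp F')" "finite (wsupp G)"
  shows "poisson n (\<lambda>m. a * F m + b * F' m) G m = a * poisson n F G m + b * poisson n F' G m"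
  unfolding poisson_def using single_contr_linear_left[OF assms]
      single_contr_linear_right[OF assms(3,1,2)]
  by (simp add: algebra_simps)

lemma poisson_linear_right:
  assumes "finite (wsupp F)" "finite (wsupp G)" "finite (wsupp G')"
  shows "poisson n F (\<lambda>m. a * G m + b * G' m) m = a * poisson n F G m + b * poisson n F G' m"
  unfolding poisson_def using single_contr_linear_right[OF assms]
      single_contr_linear_left[OF assms(2,3,1)]
  by (simp add: algebra_simps)

lemma poisson_self: "poisson n F F m = 0" by (simp add: poisson_def)
lemma poisson_antisym: "poisson n G F m = - poisson n F G m" by (simp add: poisson_def)

lemma wsupp_single_contr:
  "wsupp (single_contr n F G) \<subseteq>
    (\<lambda>(m1,m2,j). contract m1 m2 (unit_idx j)) ` (wsupp F \<times> wsupp G \<times> {..<n})"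
proof
  fix m assume "m \<in> wsupp (single_contr n F G)"
  hence "single_contr n F G m \<noteq> 0" by (simp add: wsupp_def)
  from single_contr_nonzeroD[OF this] obtain m1 m2 j where "m1\<in>wsupp F" "m2\<in>wsupp G" "j<n"
      "m = contract m1 m2 (unit_idx j)"
    by blast
  thus "m \<in> (\<lambda>(m1,m2,j). contract m1 m2 (unit_idx j)) ` (wsupp F \<times> wsupp G \<times> {..<n})" by force
qed

lemma supported_single_contr:
  assumes "supported n F" "supported n G" shows "supported n (single_contr n F G)"
proof -
  have "finite ((\<lambda>(m1,m2,j). contract m1 m2 (unit_idx j)) ` (wsupp F \<times> wsupp G \<times> {..<n}))"
    using assms by (auto simp: supported_def)
  moreover have "(\<lambda>(m1,m2,j). contract m1 m2 (unit_idx j)) ` (wsupp F \<times> wsupp G \<times> {..<n}) \<subseteq>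
      monos_below n"
    using assms contract_below by (auto simp: supported_def) blast
  ultimately show ?thesis using wsupp_single_contr[of n F G] unfolding supported_def
    by (meson finite_subset subset_trans)
qed

lemma supported_poisson: assumes "supported n F" "supported n G" shows "supported n (poisson n F G)"
proof -
  have "wsupp (poisson n F G) \<subseteq> wsupp (single_contr n F G) \<union> wsupp (single_contr n G F)"
    by (auto simp: wsupp_def poisson_def)
  thus ?thesis using supported_single_contr[OF assms] supported_single_contr[OF assms(2,1)]
      unfolding supported_def
    by (meson finite_Un finite_subset le_sup_iff subset_trans)
qed

lemma supported_scale: "supported n F \<Longrightarrow> supported n (\<lambda>m. c * F m)"
  unfolding supported_def wsupp_def by (auto intro: finite_subset)

section \<open>The chain of leading parts\<close>

definition lead_comm :: "nat \<Rightarrow> weyl \<Rightarrow> weyl \<Rightarrow> weyl" where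
  "lead_comm n A B = (\<lambda>m. 2 * \<i> * poisson n A B m)"

fun symbol_chain :: "nat \<Rightarrow> weyl \<Rightarrow> weyl \<Rightarrow> nat \<Rightarrow> weyl \<times> weyl" where
  "symbol_chain n S T 0 = (S, T)"
| "symbol_chain n S T (Suc l) =
     (let (A, B) = symbol_chain n S T l in
         (poisson n A (lead_comm n A B), poisson n B (lead_comm n A B)))"

definition leading_parts :: "nat \<Rightarrow> nat \<Rightarrow> weyl \<Rightarrow> weyl \<Rightarrow> weyl \<Rightarrow> weyl \<Rightarrow> bool" where
  "leading_parts n d y1 y2 A B \<longleftrightarrow> supported n y1 \<and> supported n y2 \<and> deg_le d y1 \<and> deg_le d y2 \<and>
     supported n A \<and> supported n B \<and>
     hom_part d y1 = (\<lambda>m. \<i> * (A m + B m)) \<and> hom_part d y2 = (\<lambda>m. B m - A m)"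

lemma poisson_plus_left:
  assumes "finite (wsupp A)" "finite (wsupp B)" "finite (wsupp C)"
  shows "poisson n (\<lambda>m. \<i> * (A m + B m)) C = (\<lambda>m. \<i> * (poisson n A C m + poisson n B C m))"
proof
  fix m
  have "(\<lambda>m. \<i> * (A m + B m)) = (\<lambda>m. \<i> * A m + \<i> * B m)" by (simp add: algebra_simps)
  then show "poisson n (\<lambda>m. \<i> * (A m + B m)) C m = \<i> * (poisson n A C m + poisson n B C m)"
    using poisson_linear_left[OF assms, of n \<i> \<i> m] by (simp add: distrib_left)
qed

lemma poisson_minus_left:
  assumes "finite (wsupp A)" "finite (wsupp B)" "finite (wsupp C)"
  shows "poisson n (\<lambda>m. B m - A m) C = (\<lambda>m. poisson n B C m - poisson n A C m)"
proof
  fix m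
  have "(\<lambda>m. B m - A m) = (\<lambda>m. 1 * B m + (-1) * A m)" by simp
  then show "poisson n (\<lambda>m. B m - A m) C m = poisson n B C m - poisson n A C m"
    using poisson_linear_left[OF assms(2,1,3), of n 1 "-1" m] by simp
qed

lemma poisson_plus_minus:
  assumes fA: "finite (wsupp A)" and fB: "finite (wsupp B)"
  shows "poisson n (\<lambda>m. \<i> * (A m + B m)) (\<lambda>m. B m - A m) = lead_comm n A B"
proof -
  have "finite (wsupp (\<lambda>m. 1 * B m + (-1) * A m))"
    using wsupp_lincomb[of 1 B "-1" A] fA fB finite_subset by blast
  then have fBA: "finite (wsupp (\<lambda>m. B m - A m))" by simp
  show ?thesis
  proof
    fix m
    have "poisson n A (\<lambda>m. 1 * B m + (-1) * A m) m = poisson n A B m - poisson n A A m"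
      "poisson n B (\<lambda>m. 1 * B m + (-1) * A m) m = poisson n B B m - poisson n B A m"
      using poisson_linear_right[OF fA fB fA, of n 1 "-1" m]
          poisson_linear_right[OF fB fB fA, of n 1 "-1" m]
      by simp_all
    then show "poisson n (\<lambda>m. \<i> * (A m + B m)) (\<lambda>m. B m - A m) m = lead_comm n A B m"
      unfolding poisson_plus_left[OF fA fB fBA] lead_comm_def poisson_self poisson_antisym[of n B A]
      by simp
  qed
qed

lemma leading_parts_step:
  assumes "leading_parts n d y1 y2 A B" "d \<ge> 2"
  shows "leading_parts n (3 * d - 4) (wcomm y1 (wcomm y1 y2)) (wcomm y2 (wcomm y1 y2))
     (poisson n A (lead_comm n A B)) (poisson n B (lead_comm n A B))"
proof -
  have I: "supported n y1" "supported n y2" "deg_le d y1" "deg_le d y2"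
    "supported n A" "supported n B"
    "hom_part d y1 = (\<lambda>m. \<i> * (A m + B m))" "hom_part d y2 = (\<lambda>m. B m - A m)"
    using assms(1) by (auto simp: leading_parts_def)
  have fA: "finite (wsupp A)" and fB: "finite (wsupp B)" using I by (auto simp: supported_def)
  let ?C = "lead_comm n A B"
  have gC: "supported n ?C" unfolding lead_comm_def by (intro supported_scale supported_poisson I)
  have fC: "finite (wsupp ?C)" using gC by (simp add: supported_def)
  let ?c = "wcomm y1 y2"
  have c: "supported n ?c" "deg_le (d + d - 2) ?c" "hom_part (d + d - 2) ?c = ?C"
    using wcomm_leading[OF I(1,3) I(2,4)] assms(2) poisson_plus_minus[OF fA fB] I(7,8) by auto
  have dd: "d + (d + d - 2) - 2 = 3 * d - 4" "d + (d + d - 2) \<ge> 2" using assms(2) by auto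
  have n1: "supported n (wcomm y1 ?c)" "deg_le (3 * d - 4) (wcomm y1 ?c)"
    "hom_part (3 * d - 4) (wcomm y1 ?c) = (\<lambda>m. \<i> * (poisson n A ?C m + poisson n B ?C m))"
    using wcomm_leading[OF I(1,3) c(1,2) dd(2)]
    unfolding dd(1) c(3) I(7) poisson_plus_left[OF fA fB fC]
    by auto
  have n2: "supported n (wcomm y2 ?c)" "deg_le (3 * d - 4) (wcomm y2 ?c)"
    "hom_part (3 * d - 4) (wcomm y2 ?c) = (\<lambda>m. poisson n B ?C m - poisson n A ?C m)"
    using wcomm_leading[OF I(2,4) c(1,2) dd(2)]
    unfolding dd(1) c(3) I(8) poisson_minus_left[OF fA fB fC]
    by auto
  show ?thesis
    unfolding leading_parts_def using n1 n2 supported_poisson[OF I(5) gC]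
        supported_poisson[OF I(6) gC]
    by auto
qed

lemma leading_parts_chain:
  assumes "leading_parts n d p q S T" "d \<ge> 2"
  shows "leading_parts n (3 ^ l * (d - 2) + 2) (fst (chain2 p q l)) (snd (chain2 p q l))
     (fst (symbol_chain n S T l)) (snd (symbol_chain n S T l))"
proof (induction l)
  case 0
  have "3 ^ 0 * (d - 2) + 2 = d" using assms(2) by simp
  then show ?case using assms(1) by simp
next
  case (Suc l)
  obtain y1 y2 where y: "chain2 p q l = (y1, y2)" by (cases "chain2 p q l")
  obtain A B where ab: "symbol_chain n S T l = (A, B)" by (cases "symbol_chain n S T l")
  have "3 * (3 ^ l * (d - 2) + 2) - 4 = 3 ^ Suc l * (d - 2) + 2" by simp
  then show ?case
    using leading_parts_step[of n "3 ^ l * (d - 2) + 2" y1 y2 A B] Suc y ab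
    by (simp add: Let_def mult.assoc)
qed

section \<open>Polynomial images of symbols\<close>

definition lin_factor :: "int \<Rightarrow> complex poly" where "lin_factor d = [:1, of_int d:]"
definition factor_prod :: "nat \<Rightarrow> (nat \<Rightarrow> int) \<Rightarrow> (nat \<Rightarrow> nat) \<Rightarrow> complex poly" where
  "factor_prod n \<delta> c = (\<Prod>j<n. lin_factor (\<delta> j) ^ c j)"

lemma lin_factor_nonzero: "lin_factor d \<noteq> 0" by (simp add: lin_factor_def)
lemma pderiv_lin_factor: "pderiv (lin_factor d) = [:of_int d:]"
  by (simp add: lin_factor_def pderiv_pCons)
lemma degree_lin_factor: "degree (lin_factor d) = (if d = 0 then 0 else 1)"
  by (simp add: lin_factor_def)

lemma factor_prod_add: "factor_prod n \<delta> (\<lambda>j. a j + b j) = factor_prod n \<delta> a * factor_prod n \<delta> b"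
  by (simp add: factor_prod_def power_add prod.distrib)

lemma factor_prod_nonzero: "factor_prod n \<delta> c \<noteq> 0"
  by (simp add: factor_prod_def lin_factor_nonzero)

lemma factor_prod_cong: "(\<And>j. j < n \<Longrightarrow> a j = b j) \<Longrightarrow> factor_prod n \<delta> a = factor_prod n \<delta> b"
  by (simp add: factor_prod_def)

lemma degree_factor_prod: "degree (factor_prod n \<delta> c) = (\<Sum>j<n. if \<delta> j = 0 then 0 else c j)"
proof -
  have "degree (factor_prod n \<delta> c) = (\<Sum>j<n. degree (lin_factor (\<delta> j) ^ c j))"
    unfolding factor_prod_def by (rule degree_prod_eq_sum_degree) (simp add: lin_factor_nonzero)
  also have "\<dots> = (\<Sum>j<n. if \<delta> j = 0 then 0 else c j)"
    by (rule sum.cong) (auto simp: degree_power_eq lin_factor_nonzero degree_lin_factor)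
  finally show ?thesis .
qed

lemma pderiv_factor_prod:
  "pderiv (factor_prod n \<delta> c)
      = (\<Sum>a<n. smult (of_int (\<delta> a) * of_nat (c a)) (factor_prod n \<delta> (\<lambda>i. c i - unit_idx a i)))"
proof -
  have "pderiv (factor_prod n \<delta> c)
      = (\<Sum>a\<in>{..<n}. (\<Prod>j\<in>{..<n} - {a}. lin_factor (\<delta> j) ^ c j) * pderiv (lin_factor (\<delta> a) ^ c a))"
    unfolding factor_prod_def by (rule pderiv_prod)
  also have "\<dots> = (\<Sum>a<n. smult (of_int (\<delta> a) * of_nat (c a))
      (factor_prod n \<delta> (\<lambda>i. c i - unit_idx a i)))"
  proof (rule sum.cong[OF refl])
    fix a assume a: "a \<in> {..<n}"
    let ?R = "\<Prod>j\<in>{..<n} - {a}. lin_factor (\<delta> j) ^ c j"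
    have R: "(\<Prod>j\<in>{..<n} - {a}. lin_factor (\<delta> j) ^ (c j - unit_idx a j)) = ?R"
      by (rule prod.cong) (auto simp: unit_idx_def)
    have p: "factor_prod n \<delta> (\<lambda>i. c i - unit_idx a i) = lin_factor (\<delta> a) ^ (c a - 1) * ?R"
      unfolding factor_prod_def using a R by (simp add: prod.remove unit_idx_def)
    show "?R * pderiv (lin_factor (\<delta> a) ^ c a)
        = smult (of_int (\<delta> a) * of_nat (c a)) (factor_prod n \<delta> (\<lambda>i. c i - unit_idx a i))"
    proof (cases "c a")
      case 0 thus ?thesis by simp
    next
      case (Suc k)
      have "pderiv (lin_factor (\<delta> a) ^ c a)
          = smult (of_nat (Suc k)) (lin_factor (\<delta> a) ^ k) * [:of_int (\<delta> a):]"
        unfolding Suc by (simp only: pderiv_power_Suc pderiv_lin_factor)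
      also have "\<dots> = smult (of_int (\<delta> a) * of_nat (Suc k)) (lin_factor (\<delta> a) ^ k)"
        by (simp add: mult.commute)
      finally show ?thesis unfolding p using Suc by (simp add: mult.commute)
    qed
  qed
  finally show ?thesis .
qed

lemma sum_swap3:
  fixes f :: "'x \<Rightarrow> 'a \<Rightarrow> 'b \<Rightarrow> 'c \<Rightarrow> 'z::comm_monoid_add"
  shows "(\<Sum>x\<in>X. \<Sum>a\<in>A. \<Sum>b\<in>B. \<Sum>c\<in>C. f x a b c) = (\<Sum>a\<in>A. \<Sum>b\<in>B. \<Sum>c\<in>C. \<Sum>x\<in>X. f x a b c)"
  by (simp only: sum.swap[of _ X])

lemma sum_single_contr_smult:
  assumes O: "finite Oset" "\<And>m1 m2 j. m1 \<in> wsupp F \<Longrightarrow> m2 \<in> wsupp G \<Longrightarrow> j < n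
      \<Longrightarrow> contract m1 m2 (unit_idx j) \<in> Oset"
  shows "(\<Sum>m\<in>Oset. smult (single_contr n F G m) (\<phi> m)) = (\<Sum>m1\<in>wsupp F. \<Sum>m2\<in>wsupp G. \<Sum>j<n.
     smult (F m1 * G m2 * of_nat (snd m1 j * fst m2 j)) (\<phi> (contract m1 m2 (unit_idx j))))"
proof -
  have "(\<Sum>m\<in>Oset. smult (single_contr n F G m) (\<phi> m)) = (\<Sum>m\<in>Oset. \<Sum>m1\<in>wsupp F. \<Sum>m2\<in>wsupp G. \<Sum>j<n.
     smult (if m = contract m1 m2 (unit_idx j) then F m1 * G m2 * of_nat (snd m1 j * fst m2 j)
         else 0) (\<phi> m))"
    by (simp only: single_contr_def smult_sum)
  also have "\<dots> = (\<Sum>m1\<in>wsupp F. \<Sum>m2\<in>wsupp G. \<Sum>j<n. \<Sum>m\<in>Oset.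
     smult (if m = contract m1 m2 (unit_idx j) then F m1 * G m2 * of_nat (snd m1 j * fst m2 j)
         else 0) (\<phi> m))"
    by (rule sum_swap3)
  also have "\<dots> = (\<Sum>m1\<in>wsupp F. \<Sum>m2\<in>wsupp G. \<Sum>j<n.
     smult (F m1 * G m2 * of_nat (snd m1 j * fst m2 j)) (\<phi> (contract m1 m2 (unit_idx j))))"
  proof (intro sum.cong refl)
    fix m1 m2 j assume h: "m1 \<in> wsupp F" "m2 \<in> wsupp G" "j \<in> {..<n}"
    have "(\<Sum>m\<in>Oset. smult
        (if m = contract m1 m2 (unit_idx j) then F m1 * G m2 * of_nat (snd m1 j * fst m2 j)
            else 0) (\<phi> m))
      = (\<Sum>m\<in>Oset. if m = contract m1 m2 (unit_idx j)
          then smult (F m1 * G m2 * of_nat (snd m1 j * fst m2 j))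
              (\<phi> (contract m1 m2 (unit_idx j))) else 0)"
      by (rule sum.cong) auto
    also have "\<dots> = smult (F m1 * G m2 * of_nat (snd m1 j * fst m2 j))
        (\<phi> (contract m1 m2 (unit_idx j)))"
      using O h by (simp add: sum.delta')
    finally show "(\<Sum>m\<in>Oset. smult
        (if m = contract m1 m2 (unit_idx j) then F m1 * G m2 * of_nat (snd m1 j * fst m2 j)
            else 0) (\<phi> m))
      = smult (F m1 * G m2 * of_nat (snd m1 j * fst m2 j)) (\<phi> (contract m1 m2 (unit_idx j)))" .
  qed
  finally show ?thesis .
qed

lemma smult_sum_right: "smult a (sum f A) = (\<Sum>x\<in>A. smult a (f x))"
  by (induction A rule: infinite_finite_induct) (auto simp: smult_add_right)

lemma pderiv_sum: "pderiv (sum f A) = (\<Sum>x\<in>A. pderiv (f x))"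
  by (induction A rule: infinite_finite_induct) (auto simp: pderiv_add)

text \<open>For a word (x + c, y + c) the exponent fst m j - x j below is c j; on other words the
  truncated subtraction gives junk, which is harmless as only shifted elements are mapped.\<close>
definition symbol_poly :: "nat \<Rightarrow> (nat \<Rightarrow> int) \<Rightarrow> (nat \<Rightarrow> nat) \<Rightarrow> weyl \<Rightarrow> complex poly" where
  "symbol_poly n \<delta> x S = (\<Sum>m\<in>wsupp S. smult (S m) (factor_prod n \<delta> (\<lambda>j. fst m j - x j)))"

definition shifted :: "(nat \<Rightarrow> nat) \<Rightarrow> (nat \<Rightarrow> nat) \<Rightarrow> weyl \<Rightarrow> bool" where
  "shifted x y S \<longleftrightarrow> (\<forall>m\<in>wsupp S. \<exists>c. m = (\<lambda>j. x j + c j, \<lambda>j. y j + c j))"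

lemma symbol_poly_superset:
  assumes "finite A" "wsupp S \<subseteq> A"
  shows "symbol_poly n \<delta> x S = (\<Sum>m\<in>A. smult (S m) (factor_prod n \<delta> (\<lambda>j. fst m j - x j)))"
  unfolding symbol_poly_def
proof (rule sum.mono_neutral_left)
  show "\<forall>i\<in>A - wsupp S. smult (S i) (factor_prod n \<delta> (\<lambda>j. fst i j - x j)) = 0"
    by (auto simp: wsupp_def)
qed (use assms in auto)

lemma symbol_poly_scale:
  assumes "finite (wsupp S)"
  shows "symbol_poly n \<delta> x (\<lambda>m. c * S m) = smult c (symbol_poly n \<delta> x S)"
proof -
  have "symbol_poly n \<delta> x (\<lambda>m. c * S m)
      = (\<Sum>m\<in>wsupp S. smult (c * S m) (factor_prod n \<delta> (\<lambda>j. fst m j - x j)))"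
    by (rule symbol_poly_superset) (use assms in \<open>auto simp: wsupp_def\<close>)
  thus ?thesis unfolding symbol_poly_def by (simp add: smult_sum_right)
qed

lemma contract_commute: "contract m1 m2 k = contract m2 m1 k"
  by (simp add: contract_def add.commute)

lemma symbol_poly_poisson:
  assumes gS: "supported n S" and gG: "supported n G"
  shows "symbol_poly n \<delta> x (poisson n S G) = (\<Sum>m1\<in>wsupp S. \<Sum>m2\<in>wsupp G. \<Sum>j<n.
     smult (S m1 * G m2 * (of_nat (snd m1 j * fst m2 j) - of_nat (snd m2 j * fst m1 j)))
       (factor_prod n \<delta> (\<lambda>i. fst (contract m1 m2 (unit_idx j)) i - x i)))"
proof -
  have fS: "finite (wsupp S)" and fG: "finite (wsupp G)" using gS gG by (auto simp: supported_def)
  define \<phi> where "\<phi> = (\<lambda>m::mono. factor_prod n \<delta> (\<lambda>i. fst m i - x i))"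
  define OS where "OS = (\<lambda>(m1,m2,j). contract m1 m2 (unit_idx j)) ` (wsupp S \<times> wsupp G \<times> {..<n})"
  define OG where "OG = (\<lambda>(m1,m2,j). contract m1 m2 (unit_idx j)) ` (wsupp G \<times> wsupp S \<times> {..<n})"
  have fO: "finite (OS \<union> OG)" unfolding OS_def OG_def using fS fG by auto
  have sub: "wsupp (poisson n S G) \<subseteq> OS \<union> OG"
  proof -
    have "wsupp (poisson n S G) \<subseteq> wsupp (single_contr n S G) \<union> wsupp (single_contr n G S)"
      by (auto simp: wsupp_def poisson_def)
    thus ?thesis using wsupp_single_contr[of n S G] wsupp_single_contr[of n G S]
        unfolding OS_def OG_def by blast
  qed
  have "symbol_poly n \<delta> x (poisson n S G) = (\<Sum>m\<in>OS \<union> OG. smult (poisson n S G m) (\<phi> m))"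
    unfolding \<phi>_def by (rule symbol_poly_superset[OF fO sub])
  also have "\<dots> = (\<Sum>m\<in>OS \<union> OG. smult (single_contr n S G m) (\<phi> m)) -
      (\<Sum>m\<in>OS \<union> OG. smult (single_contr n G S m) (\<phi> m))"
    by (simp add: poisson_def smult_diff_left sum_subtractf)
  also have "(\<Sum>m\<in>OS \<union> OG. smult (single_contr n S G m) (\<phi> m)) = (\<Sum>m1\<in>wsupp S. \<Sum>m2\<in>wsupp G. \<Sum>j<n.
     smult (S m1 * G m2 * of_nat (snd m1 j * fst m2 j)) (\<phi> (contract m1 m2 (unit_idx j))))"
    by (rule sum_single_contr_smult[OF fO], unfold OS_def, rule UnI1,
        rule image_eqI[where x="(_,_,_)"]) auto
  also have "(\<Sum>m\<in>OS \<union> OG. smult (single_contr n G S m) (\<phi> m)) = (\<Sum>m1\<in>wsupp G. \<Sum>m2\<in>wsupp S. \<Sum>j<n.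
     smult (G m1 * S m2 * of_nat (snd m1 j * fst m2 j)) (\<phi> (contract m1 m2 (unit_idx j))))"
    by (rule sum_single_contr_smult[OF fO], unfold OG_def, rule UnI2,
        rule image_eqI[where x="(_,_,_)"]) auto
  also have "\<dots> = (\<Sum>m2\<in>wsupp S. \<Sum>m1\<in>wsupp G. \<Sum>j<n.
     smult (G m1 * S m2 * of_nat (snd m1 j * fst m2 j)) (\<phi> (contract m1 m2 (unit_idx j))))"
    by (rule sum.swap)
  also have "\<dots> = (\<Sum>m1\<in>wsupp S. \<Sum>m2\<in>wsupp G. \<Sum>j<n.
     smult (S m1 * G m2 * of_nat (snd m2 j * fst m1 j)) (\<phi> (contract m1 m2 (unit_idx j))))"
    by (intro sum.cong refl) (simp add: contract_commute[of _ _ "unit_idx _"] mult.commute)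
  finally show ?thesis unfolding \<phi>_def
    by (simp add: right_diff_distrib smult_diff_left sum_subtractf)
qed

lemma of_nat_diff_complex: "(of_nat a - of_nat b :: complex) = of_int (int a - int b)" by simp

text \<open>The image of the bracket of a word (x + ca, y + ca) with a diagonal word (cb, cb),
  summed over the contracted index j.\<close>
lemma contraction_poly_diag:
  fixes x y ca cb :: "nat \<Rightarrow> nat" and s :: int
  assumes sd: "\<And>j. int (x j) - int (y j) = s * \<delta> j"
  shows "(\<Sum>j<n. smult (of_nat ((y j + ca j) * cb j) - of_nat (cb j * (x j + ca j)))
            (factor_prod n \<delta> (\<lambda>i. x i + ca i + cb i - unit_idx j i - x i)))
     = smult (- of_int s) (factor_prod n \<delta> ca * pderiv (factor_prod n \<delta> cb))"
proof -
  have "smult (- of_int s) (factor_prod n \<delta> ca * pderiv (factor_prod n \<delta> cb)) =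
     (\<Sum>j<n. smult (- of_int s * (of_int (\<delta> j) * of_nat (cb j)))
         (factor_prod n \<delta> ca * factor_prod n \<delta> (\<lambda>i. cb i - unit_idx j i)))"
    by (simp add: pderiv_factor_prod sum_distrib_left smult_sum_right)
  also have "\<dots> = (\<Sum>j<n. smult (- of_int s * (of_int (\<delta> j) * of_nat (cb j)))
      (factor_prod n \<delta> (\<lambda>i. ca i + (cb i - unit_idx j i))))"
    by (simp add: factor_prod_add)
  also have "\<dots> = (\<Sum>j<n. smult (of_nat ((y j + ca j) * cb j) - of_nat (cb j * (x j + ca j)))
            (factor_prod n \<delta> (\<lambda>i. x i + ca i + cb i - unit_idx j i - x i)))"
  proof (rule sum.cong[OF refl])
    fix j assume j: "j \<in> {..<n}"
    show "smult (- of_int s * (of_int (\<delta> j) * of_nat (cb j)))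
        (factor_prod n \<delta> (\<lambda>i. ca i + (cb i - unit_idx j i))) =
       smult (of_nat ((y j + ca j) * cb j) - of_nat (cb j * (x j + ca j)))
           (factor_prod n \<delta> (\<lambda>i. x i + ca i + cb i - unit_idx j i - x i))"
    proof (cases "cb j = 0")
      case True thus ?thesis by simp
    next
      case False
      have xi: "int (x j) = int (y j) + s * \<delta> j" using sd[of j] by simp
      have ie: "int ((y j + ca j) * cb j) - int (cb j * (x j + ca j)) = - s * (\<delta> j * int (cb j))"
        by (simp add: xi algebra_simps)
      have co: "(of_nat ((y j + ca j) * cb j) - of_nat (cb j * (x j + ca j)) :: complex)
          = - of_int s * (of_int (\<delta> j) * of_nat (cb j))"
        unfolding of_nat_diff_complex ie by simp
      have pa: "factor_prod n \<delta> (\<lambda>i. x i + ca i + cb i - unit_idx j i - x i)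
          = factor_prod n \<delta> (\<lambda>i. ca i + (cb i - unit_idx j i))"
        by (rule factor_prod_cong) (use False in \<open>auto simp: unit_idx_def\<close>)
      show ?thesis unfolding co pa ..
    qed
  qed
  finally show ?thesis by simp
qed

text \<open>The same for the words (xp + ca, xm + ca) and (xm + cb, xp + cb).\<close>
lemma contraction_poly_cross:
  fixes xp xm ca cb :: "nat \<Rightarrow> nat"
  assumes sd: "\<And>j. int (xp j) - int (xm j) = \<delta> j"
  shows "(\<Sum>j<n. smult
      (of_nat ((xm j + ca j) * (xm j + cb j)) - of_nat ((xp j + cb j) * (xp j + ca j)))
            (factor_prod n \<delta> (\<lambda>i. xp i + ca i + (xm i + cb i) - unit_idx j i)))
     = - pderiv (factor_prod n \<delta> (\<lambda>j. xp j + xm j) * factor_prod n \<delta> ca * factor_prod n \<delta> cb)"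
proof -
  define w where "w = (\<lambda>i. xp i + ca i + (xm i + cb i))"
  have pw: "factor_prod n \<delta> (\<lambda>j. xp j + xm j) * factor_prod n \<delta> ca * factor_prod n \<delta> cb
      = factor_prod n \<delta> w"
  proof -
    have "factor_prod n \<delta> (\<lambda>j. xp j + xm j) * factor_prod n \<delta> ca * factor_prod n \<delta> cb
        = factor_prod n \<delta> (\<lambda>j. (xp j + xm j) + ca j + cb j)"
      by (simp add: factor_prod_add)
    also have "\<dots> = factor_prod n \<delta> w" by (rule factor_prod_cong) (simp add: w_def)
    finally show ?thesis .
  qed
  have "- pderiv (factor_prod n \<delta> w)
      = (\<Sum>j<n. smult (- (of_int (\<delta> j) * of_nat (w j))) (factor_prod n \<delta> (\<lambda>i. w i - unit_idx j i)))"
    by (simp add: pderiv_factor_prod sum_negf)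
  also have "\<dots> = (\<Sum>j<n. smult
      (of_nat ((xm j + ca j) * (xm j + cb j)) - of_nat ((xp j + cb j) * (xp j + ca j)))
            (factor_prod n \<delta> (\<lambda>i. xp i + ca i + (xm i + cb i) - unit_idx j i)))"
  proof (rule sum.cong[OF refl])
    fix j
    have xi: "int (xp j) = int (xm j) + \<delta> j" using sd[of j] by simp
    have ie: "int ((xm j + ca j) * (xm j + cb j)) - int ((xp j + cb j) * (xp j + ca j))
        = - (\<delta> j * int (w j))"
      by (simp add: xi w_def algebra_simps)
    have co: "(of_nat ((xm j + ca j) * (xm j + cb j)) - of_nat ((xp j + cb j) * (xp j + ca j))
        :: complex) = - (of_int (\<delta> j) * of_nat (w j))"
      unfolding of_nat_diff_complex ie by simp
    show "smult (- (of_int (\<delta> j) * of_nat (w j))) (factor_prod n \<delta> (\<lambda>i. w i - unit_idx j i)) =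
      smult (of_nat ((xm j + ca j) * (xm j + cb j)) - of_nat ((xp j + cb j) * (xp j + ca j)))
            (factor_prod n \<delta> (\<lambda>i. xp i + ca i + (xm i + cb i) - unit_idx j i))"
      unfolding co w_def ..
  qed
  finally show ?thesis unfolding pw by simp
qed

lemma symbol_poly_poisson_diag:
  assumes gS: "supported n S" and gG: "supported n G" and sS: "shifted x y S"
    and sG: "shifted (\<lambda>_. 0) (\<lambda>_. 0) G"
    and sd: "\<And>j. int (x j) - int (y j) = s * \<delta> j"
  shows "symbol_poly n \<delta> x (poisson n S G)
      = smult (- of_int s) (symbol_poly n \<delta> x S * pderiv (symbol_poly n \<delta> (\<lambda>_. 0) G))"
proof -
  have inner: "(\<Sum>j<n. smult
      (S m1 * G m2 * (of_nat (snd m1 j * fst m2 j) - of_nat (snd m2 j * fst m1 j)))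
       (factor_prod n \<delta> (\<lambda>i. fst (contract m1 m2 (unit_idx j)) i - x i)))
     = smult (S m1 * G m2) (smult (- of_int s)
         (factor_prod n \<delta> (\<lambda>j. fst m1 j - x j) * pderiv (factor_prod n \<delta> (\<lambda>j. fst m2 j - 0))))"
    if h: "m1 \<in> wsupp S" "m2 \<in> wsupp G" for m1 m2
  proof -
    obtain c1 where m1: "m1 = (\<lambda>j. x j + c1 j, \<lambda>j. y j + c1 j)" using sS h(1)
      by (auto simp: shifted_def)
    obtain c2 where m2: "m2 = (\<lambda>j. 0 + c2 j, \<lambda>j. 0 + c2 j)" using sG h(2) unfolding shifted_def
      by blast
    have e1: "(\<lambda>j. fst m1 j - x j) = c1" using m1 by auto
    have e2: "(\<lambda>j. fst m2 j - 0) = c2" using m2 by auto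
    have "(\<Sum>j<n. smult (of_nat (snd m1 j * fst m2 j) - of_nat (snd m2 j * fst m1 j))
       (factor_prod n \<delta> (\<lambda>i. fst (contract m1 m2 (unit_idx j)) i - x i)))
           = smult (- of_int s) (factor_prod n \<delta> c1 * pderiv (factor_prod n \<delta> c2))"
      using contraction_poly_diag[OF sd, where n=n and ca=c1 and cb=c2]
      by (simp add: m1 m2 contract_def)
    moreover have "(\<Sum>j<n. smult
        (S m1 * G m2 * (of_nat (snd m1 j * fst m2 j) - of_nat (snd m2 j * fst m1 j)))
       (factor_prod n \<delta> (\<lambda>i. fst (contract m1 m2 (unit_idx j)) i - x i)))
           = smult (S m1 * G m2) (\<Sum>j<n. smult
               (of_nat (snd m1 j * fst m2 j) - of_nat (snd m2 j * fst m1 j))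
       (factor_prod n \<delta> (\<lambda>i. fst (contract m1 m2 (unit_idx j)) i - x i)))"
      by (simp only: smult_sum_right smult_smult)
    ultimately show ?thesis unfolding e1 e2 by simp
  qed
  have "symbol_poly n \<delta> x (poisson n S G) = (\<Sum>m1\<in>wsupp S. \<Sum>m2\<in>wsupp G.
     smult (S m1 * G m2) (smult (- of_int s)
         (factor_prod n \<delta> (\<lambda>j. fst m1 j - x j) * pderiv (factor_prod n \<delta> (\<lambda>j. fst m2 j - 0)))))"
    unfolding symbol_poly_poisson[OF gS gG] by (intro sum.cong refl inner)
  also have "\<dots> = smult (- of_int s) (symbol_poly n \<delta> x S * pderiv (symbol_poly n \<delta> (\<lambda>_. 0) G))"
    unfolding symbol_poly_def pderiv_sum pderiv_smult sum_product smult_sum_right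
    by (intro sum.cong refl) (simp add: mult.commute mult.left_commute)
  finally show ?thesis .
qed

lemma symbol_poly_poisson_cross:
  assumes gS: "supported n S" and gT: "supported n T" and sS: "shifted xp xm S"
    and sT: "shifted xm xp T"
    and sd: "\<And>j. int (xp j) - int (xm j) = \<delta> j"
  shows "symbol_poly n \<delta> (\<lambda>_. 0) (poisson n S T)
      = - pderiv (factor_prod n \<delta> (\<lambda>j. xp j + xm j) * symbol_poly n \<delta> xp S * symbol_poly n \<delta> xm T)"
proof -
  let ?Q = "factor_prod n \<delta> (\<lambda>j. xp j + xm j)"
  have inner: "(\<Sum>j<n. smult
      (S m1 * T m2 * (of_nat (snd m1 j * fst m2 j) - of_nat (snd m2 j * fst m1 j)))
       (factor_prod n \<delta> (\<lambda>i. fst (contract m1 m2 (unit_idx j)) i - 0)))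
     = smult (S m1 * T m2) (- pderiv
         (?Q * factor_prod n \<delta> (\<lambda>j. fst m1 j - xp j) * factor_prod n \<delta> (\<lambda>j. fst m2 j - xm j)))"
    if h: "m1 \<in> wsupp S" "m2 \<in> wsupp T" for m1 m2
  proof -
    obtain c1 where m1: "m1 = (\<lambda>j. xp j + c1 j, \<lambda>j. xm j + c1 j)" using sS h(1)
      by (auto simp: shifted_def)
    obtain c2 where m2: "m2 = (\<lambda>j. xm j + c2 j, \<lambda>j. xp j + c2 j)" using sT h(2)
      by (auto simp: shifted_def)
    have e1: "(\<lambda>j. fst m1 j - xp j) = c1" using m1 by auto
    have e2: "(\<lambda>j. fst m2 j - xm j) = c2" using m2 by auto
    have "(\<Sum>j<n. smult (of_nat (snd m1 j * fst m2 j) - of_nat (snd m2 j * fst m1 j))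
       (factor_prod n \<delta> (\<lambda>i. fst (contract m1 m2 (unit_idx j)) i - 0)))
           = - pderiv (?Q * factor_prod n \<delta> c1 * factor_prod n \<delta> c2)"
      using contraction_poly_cross[OF sd, where n=n and ca=c1 and cb=c2]
      by (simp add: m1 m2 contract_def)
    moreover have "(\<Sum>j<n. smult
        (S m1 * T m2 * (of_nat (snd m1 j * fst m2 j) - of_nat (snd m2 j * fst m1 j)))
       (factor_prod n \<delta> (\<lambda>i. fst (contract m1 m2 (unit_idx j)) i - 0)))
           = smult (S m1 * T m2) (\<Sum>j<n. smult
               (of_nat (snd m1 j * fst m2 j) - of_nat (snd m2 j * fst m1 j))
       (factor_prod n \<delta> (\<lambda>i. fst (contract m1 m2 (unit_idx j)) i - 0)))"
      by (simp only: smult_sum_right smult_smult)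
    ultimately show ?thesis unfolding e1 e2 by simp
  qed
  have "symbol_poly n \<delta> (\<lambda>_. 0) (poisson n S T) = (\<Sum>m1\<in>wsupp S. \<Sum>m2\<in>wsupp T.
     smult (S m1 * T m2) (- pderiv
       (?Q * factor_prod n \<delta> (\<lambda>j. fst m1 j - xp j) * factor_prod n \<delta> (\<lambda>j. fst m2 j - xm j))))"
    unfolding symbol_poly_poisson[OF gS gT] by (intro sum.cong refl inner)
  also have "\<dots> = - pderiv (?Q * symbol_poly n \<delta> xp S * symbol_poly n \<delta> xm T)"
  proof -
    have "?Q * symbol_poly n \<delta> xp S * symbol_poly n \<delta> xm T
        = ?Q * (symbol_poly n \<delta> xp S * symbol_poly n \<delta> xm T)" by (simp only: mult.assoc)
    also have "\<dots> = (\<Sum>m1\<in>wsupp S.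
        \<Sum>m2\<in>wsupp T. ?Q * (smult (S m1) (factor_prod n \<delta> (\<lambda>j. fst m1 j - xp j)) *
         smult (T m2) (factor_prod n \<delta> (\<lambda>j. fst m2 j - xm j))))"
      by (simp only: symbol_poly_def sum_product) (simp only: sum_distrib_left)
    also have "\<dots> = (\<Sum>m1\<in>wsupp S.
        \<Sum>m2\<in>wsupp T. smult (S m1 * T m2) (?Q * factor_prod n \<delta> (\<lambda>j. fst m1 j - xp j) *
         factor_prod n \<delta> (\<lambda>j. fst m2 j - xm j)))"
      by (intro sum.cong refl) (simp add: mult_ac)
    finally have "?Q * symbol_poly n \<delta> xp S * symbol_poly n \<delta> xm T = \<dots>" .
    thus ?thesis by (simp add: pderiv_sum pderiv_smult sum_negf)
  qed
  finally show ?thesis .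
qed

lemma shifted_scale: "shifted x y S \<Longrightarrow> shifted x y (\<lambda>m. c * S m)"
  by (auto simp: shifted_def wsupp_def)

lemma wsupp_poisson_cases:
  assumes "m \<in> wsupp (poisson n F G)"
  obtains m1 m2 j where "m1\<in>wsupp F" "m2\<in>wsupp G" "j<n" "m = contract m1 m2 (unit_idx j)"
      "snd m1 j * fst m2 j \<noteq> 0"
    | m1 m2 j where "m1\<in>wsupp G" "m2\<in>wsupp F" "j<n" "m = contract m1 m2 (unit_idx j)"
        "snd m1 j * fst m2 j \<noteq> 0"
proof -
  have "single_contr n F G m \<noteq> 0 \<or> single_contr n G F m \<noteq> 0" using assms
    by (auto simp: wsupp_def poisson_def)
  thus ?thesis using single_contr_nonzeroD that by blast
qed

lemma shifted_poisson_diag: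
  assumes sS: "shifted x y S" and sG: "shifted (\<lambda>_. 0) (\<lambda>_. 0) G"
  shows "shifted x y (poisson n S G)"
  unfolding shifted_def
proof
  fix m assume m: "m \<in> wsupp (poisson n S G)"
  show "\<exists>c. m = (\<lambda>j. x j + c j, \<lambda>j. y j + c j)"
  proof (cases rule: wsupp_poisson_cases[OF m])
    case (1 m1 m2 j)
    obtain c1 where m1: "m1 = (\<lambda>j. x j + c1 j, \<lambda>j. y j + c1 j)" using sS 1
      by (auto simp: shifted_def)
    obtain c2 where m2: "m2 = (\<lambda>j. 0 + c2 j, \<lambda>j. 0 + c2 j)" using sG 1 unfolding shifted_def
      by blast
    have c2: "c2 j \<noteq> 0" using 1 m2 by simp
    have mm: "m = (\<lambda>i. x i + (c1 i + c2 i - unit_idx j i), \<lambda>i. y i + (c1 i + c2 i - unit_idx j i))"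
      using 1 m1 m2 c2 by (auto simp: contract_def unit_idx_def fun_eq_iff)
    show ?thesis by (rule exI[where x="\<lambda>i. c1 i + c2 i - unit_idx j i"], rule mm)
  next
    case (2 m1 m2 j)
    obtain c1 where m2: "m2 = (\<lambda>j. x j + c1 j, \<lambda>j. y j + c1 j)" using sS 2
      by (auto simp: shifted_def)
    obtain c2 where m1: "m1 = (\<lambda>j. 0 + c2 j, \<lambda>j. 0 + c2 j)" using sG 2 unfolding shifted_def
      by blast
    have c2: "c2 j \<noteq> 0" using 2 m1 by simp
    have mm: "m = (\<lambda>i. x i + (c1 i + c2 i - unit_idx j i), \<lambda>i. y i + (c1 i + c2 i - unit_idx j i))"
      using 2 m1 m2 c2 by (auto simp: contract_def unit_idx_def fun_eq_iff)
    show ?thesis by (rule exI[where x="\<lambda>i. c1 i + c2 i - unit_idx j i"], rule mm)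
  qed
qed

lemma shifted_poisson_cross:
  assumes sS: "shifted xp xm S" and sT: "shifted xm xp T"
  shows "shifted (\<lambda>_. 0) (\<lambda>_. 0) (poisson n S T)"
  unfolding shifted_def
proof
  fix m assume m: "m \<in> wsupp (poisson n S T)"
  show "\<exists>c. m = (\<lambda>j. 0 + c j, \<lambda>j. 0 + c j)"
  proof (cases rule: wsupp_poisson_cases[OF m])
    case (1 m1 m2 j)
    obtain c1 where m1: "m1 = (\<lambda>j. xp j + c1 j, \<lambda>j. xm j + c1 j)" using sS 1
      by (auto simp: shifted_def)
    obtain c2 where m2: "m2 = (\<lambda>j. xm j + c2 j, \<lambda>j. xp j + c2 j)" using sT 1
      by (auto simp: shifted_def)
    have mm: "m = (\<lambda>i. 0 + (xp i + c1 i + (xm i + c2 i) - unit_idx j i),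
        \<lambda>i. 0 + (xp i + c1 i + (xm i + c2 i) - unit_idx j i))"
      using 1 m1 m2 by (auto simp: contract_def fun_eq_iff)
    show ?thesis by (rule exI[where x="\<lambda>i. xp i + c1 i + (xm i + c2 i) - unit_idx j i"], rule mm)
  next
    case (2 m1 m2 j)
    obtain c1 where m2: "m2 = (\<lambda>j. xp j + c1 j, \<lambda>j. xm j + c1 j)" using sS 2
      by (auto simp: shifted_def)
    obtain c2 where m1: "m1 = (\<lambda>j. xm j + c2 j, \<lambda>j. xp j + c2 j)" using sT 2
      by (auto simp: shifted_def)
    have mm: "m = (\<lambda>i. 0 + (xp i + c1 i + (xm i + c2 i) - unit_idx j i),
        \<lambda>i. 0 + (xp i + c1 i + (xm i + c2 i) - unit_idx j i))"
      using 2 m1 m2 by (auto simp: contract_def fun_eq_iff)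
    show ?thesis by (rule exI[where x="\<lambda>i. xp i + c1 i + (xm i + c2 i) - unit_idx j i"], rule mm)
  qed
qed

lemma supported_finite: "supported n F \<Longrightarrow> finite (wsupp F)" by (simp add: supported_def)

section \<open>Nonvanishing of the leading parts\<close>

definition symbol_inv :: "nat \<Rightarrow> (nat \<Rightarrow> int) \<Rightarrow> midx \<Rightarrow> midx \<Rightarrow> weyl \<Rightarrow> weyl \<Rightarrow> bool" where
  "symbol_inv n \<delta> xp xm A B \<longleftrightarrow> supported n A \<and> supported n B \<and> shifted xp xm A \<and> shifted xm xp B \<and>
     symbol_poly n \<delta> xp A \<noteq> 0 \<and> symbol_poly n \<delta> xm B \<noteq> 0 \<and>
     2 \<le> degree (factor_prod n \<delta> (\<lambda>j. xp j + xm j) * symbol_poly n \<delta> xp A * symbol_poly n \<delta> xm B)"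

lemma pderiv_pderiv_degree:
  fixes H :: "'a::{idom, ring_char_0} poly"
  assumes "2 \<le> degree H"
  shows "pderiv (pderiv H) \<noteq> 0" "degree (pderiv (pderiv H)) = degree H - 2"
  using assms by (simp_all add: pderiv_eq_0_iff degree_pderiv)

lemma symbol_inv_step:
  assumes sd: "\<And>j. int (xp j) - int (xm j) = \<delta> j" and inv: "symbol_inv n \<delta> xp xm A B"
  shows "symbol_inv n \<delta> xp xm (poisson n A (lead_comm n A B)) (poisson n B (lead_comm n A B))"
proof -
  have gA: "supported n A" and gB: "supported n B" and sA: "shifted xp xm A"
      and sB: "shifted xm xp B"
    using inv by (auto simp: symbol_inv_def)
  define C where "C = lead_comm n A B"
  have gAB: "supported n (poisson n A B)" by (rule supported_poisson[OF gA gB])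
  have gC: "supported n C" unfolding C_def lead_comm_def by (rule supported_scale[OF gAB])
  have sC: "shifted (\<lambda>_. 0) (\<lambda>_. 0) C"
    unfolding C_def lead_comm_def by (rule shifted_scale, rule shifted_poisson_cross[OF sA sB])
  define Q where "Q = factor_prod n \<delta> (\<lambda>j. xp j + xm j)"
  define F where "F = symbol_poly n \<delta> xp A"
  define G where "G = symbol_poly n \<delta> xm B"
  define H where "H = Q * F * G"
  have Qnz: "Q \<noteq> 0" and Fnz: "F \<noteq> 0" and Gnz: "G \<noteq> 0" and dH: "2 \<le> degree H"
    using inv factor_prod_nonzero by (auto simp: symbol_inv_def Q_def F_def G_def H_def)
  have "symbol_poly n \<delta> (\<lambda>_. 0) C = smult (2 * \<i>) (- pderiv H)"
    unfolding C_def lead_comm_def symbol_poly_scale[OF supported_finite[OF gAB]]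
      symbol_poly_poisson_cross[OF gA gB sA sB sd] H_def Q_def F_def G_def ..
  then have EC: "pderiv (symbol_poly n \<delta> (\<lambda>_. 0) C) = smult (- 2 * \<i>) (pderiv (pderiv H))"
    by (simp add: pderiv_smult pderiv_minus)
  have sd': "\<And>j. int (xp j) - int (xm j) = 1 * \<delta> j" "\<And>j. int (xm j) - int (xp j) = (-1) * \<delta> j"
    using sd by (simp_all add: algebra_simps)
  have F': "symbol_poly n \<delta> xp (poisson n A C) = smult (2 * \<i>) (F * pderiv (pderiv H))"
    unfolding F_def using symbol_poly_poisson_diag[OF gA gC sA sC sd'(1)] EC by simp
  have G': "symbol_poly n \<delta> xm (poisson n B C) = smult (- 2 * \<i>) (G * pderiv (pderiv H))"
    unfolding G_def using symbol_poly_poisson_diag[OF gB gC sB sC sd'(2)] EC by simp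
  note H'' = pderiv_pderiv_degree[OF dH]
  have "degree H = degree Q + degree F + degree G"
    unfolding H_def using Qnz Fnz Gnz by (simp add: degree_mult_eq)
  moreover have "degree (Q * symbol_poly n \<delta> xp (poisson n A C) * symbol_poly n \<delta> xm
      (poisson n B C))
      = degree Q + (degree F + (degree H - 2)) + (degree G + (degree H - 2))"
    unfolding F' G' using Qnz Fnz Gnz H'' by (simp add: degree_mult_eq)
  ultimately have "2 \<le> degree
      (Q * symbol_poly n \<delta> xp (poisson n A C) * symbol_poly n \<delta> xm (poisson n B C))"
    using dH by linarith
  moreover have "symbol_poly n \<delta> xp (poisson n A C) \<noteq> 0" "symbol_poly n \<delta> xm (poisson n B C) \<noteq> 0"
    unfolding F' G' using Fnz Gnz H''(1) by simp_all
  moreover have "supported n (poisson n A C)" "supported n (poisson n B C)"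
    using supported_poisson gA gB gC by auto
  moreover have "shifted xp xm (poisson n A C)" "shifted xm xp (poisson n B C)"
    using shifted_poisson_diag[OF sA sC] shifted_poisson_diag[OF sB sC] by auto
  ultimately show ?thesis unfolding symbol_inv_def C_def Q_def by auto
qed

lemma symbol_inv_chain:
  assumes sd: "\<And>j. int (xp j) - int (xm j) = \<delta> j" and "symbol_inv n \<delta> xp xm S T"
  shows "symbol_inv n \<delta> xp xm (fst (symbol_chain n S T l)) (snd (symbol_chain n S T l))"
proof (induction l)
  case 0
  then show ?case using assms(2) by simp
next
  case (Suc l)
  obtain A B where "symbol_chain n S T l = (A, B)" by (cases "symbol_chain n S T l")
  then show ?case using symbol_inv_step[OF sd, where A=A and B=B] Suc by simp
qed

lemma shifted_disjoint:
  assumes sd: "\<And>j. int (xp j) - int (xm j) = \<delta> j" and dz: "\<delta> k \<noteq> 0"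
    and sA: "shifted xp xm A" and sB: "shifted xm xp B" and mA: "m \<in> wsupp A"
  shows "B m = 0"
proof (rule ccontr)
  assume "B m \<noteq> 0" hence mB: "m \<in> wsupp B" by (simp add: wsupp_def)
  obtain c where c: "m = (\<lambda>j. xp j + c j, \<lambda>j. xm j + c j)" using sA mA by (auto simp: shifted_def)
  obtain c' where c': "m = (\<lambda>j. xm j + c' j, \<lambda>j. xp j + c' j)" using sB mB
    by (auto simp: shifted_def)
  have "xp k + c k = xm k + c' k" "xm k + c k = xp k + c' k"
    using c c' by (auto simp: fun_eq_iff)
  hence "xp k = xm k" by linarith
  thus False using sd[of k] dz by simp
qed

lemma wdeg_eq_of_hom_part:
  assumes fin: "finite (wsupp y)" and dl: "deg_le d y" and t: "hom_part d y m0 \<noteq> 0"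
  shows "wdeg y = ereal (real d)"
proof -
  have y0: "y m0 \<noteq> 0" and dm0: "mono_deg m0 = d" using t
    by (auto simp: hom_part_def split: if_splits)
  have "Max (mono_deg ` wsupp y) = d"
  proof (rule Max_eqI)
    show "finite (mono_deg ` wsupp y)" using fin by simp
    show "\<And>z. z \<in> mono_deg ` wsupp y \<Longrightarrow> z \<le> d" using dl by (auto simp: deg_le_def)
    show "d \<in> mono_deg ` wsupp y" using y0 dm0 by (auto simp: wsupp_def)
  qed
  moreover have "y \<noteq> (\<lambda>_. 0)" using y0 by auto
  ultimately show ?thesis by (simp add: wdeg_def)
qed

text \<open>Since A and B have disjoint supports and A is nonzero, neither i(A + B) nor B - A vanishes.\<close>
lemma wdeg_leading_parts:
  assumes I: "leading_parts n d y1 y2 A B" and J: "symbol_inv n \<delta> xp xm A B"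
    and sd: "\<And>j. int (xp j) - int (xm j) = \<delta> j" and dz: "\<delta> k \<noteq> 0"
  shows "wdeg y1 = ereal (real d) \<and> wdeg y2 = ereal (real d)"
proof -
  have "wsupp A \<noteq> {}"
    using J by (auto simp: symbol_inv_def symbol_poly_def)
  then obtain m0 where m0: "m0 \<in> wsupp A" by blast
  have "B m0 = 0"
    by (rule shifted_disjoint[where xp=xp and xm=xm and \<delta>=\<delta> and k=k])
      (use sd dz m0 J in \<open>auto simp: symbol_inv_def\<close>)
  moreover have "A m0 \<noteq> 0" using m0 by (simp add: wsupp_def)
  ultimately have "hom_part d y1 m0 \<noteq> 0" "hom_part d y2 m0 \<noteq> 0"
    using I by (simp_all add: leading_parts_def)
  then show ?thesis
    using I wdeg_eq_of_hom_part by (auto simp: leading_parts_def supported_def)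
qed

lemma wdeg_chain2:
  assumes "leading_parts n d p q S T" "d \<ge> 2" "symbol_inv n \<delta> xp xm S T"
    and sd: "\<And>j. int (xp j) - int (xm j) = \<delta> j" and "\<delta> k \<noteq> 0"
  shows "wdeg (fst (chain2 p q l)) = ereal (real (3 ^ l * (d - 2) + 2)) \<and>
    wdeg (snd (chain2 p q l)) = ereal (real (3 ^ l * (d - 2) + 2))"
  using wdeg_leading_parts[OF leading_parts_chain[OF assms(1,2)] symbol_inv_chain[OF sd assms(3)]
      sd assms(5)] .

lemma hom_part_eq_self: "(\<And>m. m \<in> wsupp f \<Longrightarrow> mono_deg m = d) \<Longrightarrow> hom_part d f = f"
  unfolding hom_part_def wsupp_def fun_eq_iff by (metis mem_Collect_eq)

lemma leading_parts_initial:
  assumes ab: "(a, b) \<in> monos_below n"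
  shows "leading_parts n (mono_deg_below n (a, b)) (gplus (a, b)) (gminus (a, b))
    (wbasis (a, b)) (wbasis (b, a))"
proof -
  let ?d = "mono_deg_below n (a, b)"
  have ba: "(b, a) \<in> monos_below n" using ab by (auto simp: monos_below_def)
  have wsb: "wsupp (wbasis x) = {x}" for x by (auto simp: wsupp_def wbasis_def)
  have deg: "mono_deg (a, b) = ?d" "mono_deg (b, a) = ?d"
    using mono_deg_eq_below[OF ab] mono_deg_eq_below[OF ba]
        by (auto simp: mono_deg_below_def add.commute)
  have dag: "wdagger (wbasis (a, b)) = wbasis (b, a)"
    by (auto simp: wdagger_def wbasis_def fun_eq_iff)
  have p: "gplus (a, b) = (\<lambda>x. \<i> * (wbasis (a, b) x + wbasis (b, a) x))"
    unfolding gplus_def dag by (simp add: add.commute)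
  have q: "gminus (a, b) = (\<lambda>x. wbasis (b, a) x - wbasis (a, b) x)"
    unfolding gminus_def dag ..
  have "gplus (a, b) x = 0" "gminus (a, b) x = 0" if "x \<notin> {(a, b), (b, a)}" for x
    using that by (simp_all add: p q wbasis_def)
  then have sp: "wsupp (gplus (a, b)) \<subseteq> {(a, b), (b, a)}" "wsupp (gminus (a, b)) \<subseteq> {(a, b), (b, a)}"
    unfolding wsupp_def by blast+
  then have "\<And>x. x \<in> wsupp (gplus (a, b)) \<Longrightarrow> mono_deg x = ?d"
    "\<And>x. x \<in> wsupp (gminus (a, b)) \<Longrightarrow> mono_deg x = ?d"
    using deg by blast+
  then have hom: "hom_part ?d (gplus (a, b)) = gplus (a, b)"
      "hom_part ?d (gminus (a, b)) = gminus (a, b)"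
    and "deg_le ?d (gplus (a, b))" "deg_le ?d (gminus (a, b))"
    by (simp_all add: hom_part_eq_self deg_le_def)
  moreover have "supported n (gplus (a, b))" "supported n (gminus (a, b))"
    "supported n (wbasis (a, b))" "supported n (wbasis (b, a))"
    using sp ab ba unfolding supported_def wsb by (auto intro: finite_subset)
  ultimately show ?thesis unfolding leading_parts_def hom using p q by blast
qed

lemma symbol_poly_wbasis: "symbol_poly n \<delta> x (wbasis m) = factor_prod n \<delta> (\<lambda>j. fst m j - x j)"
proof -
  have "wsupp (wbasis m) = {m}" by (auto simp: wsupp_def wbasis_def)
  thus ?thesis by (simp add: symbol_poly_def wbasis_def)
qed

definition unbalanced_deg :: "nat \<Rightarrow> midx \<Rightarrow> midx \<Rightarrow> nat" where
  "unbalanced_deg n \<alpha> \<beta> = (\<Sum>j<n. if \<alpha> j = \<beta> j then 0 else \<alpha> j + \<beta> j)"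

lemma two_le_unbalanced_deg:
  assumes "(\<exists>k<n. \<alpha> k + \<beta> k \<ge> 2 \<and> \<alpha> k \<noteq> \<beta> k) \<or>
    (\<exists>k<n. \<exists>k'<n. k \<noteq> k' \<and> \<alpha> k + \<beta> k = 1 \<and> \<alpha> k' + \<beta> k' = 1)"
  shows "2 \<le> unbalanced_deg n \<alpha> \<beta>"
  using assms
proof
  assume "\<exists>k<n. \<alpha> k + \<beta> k \<ge> 2 \<and> \<alpha> k \<noteq> \<beta> k"
  then obtain k where k: "k < n" "\<alpha> k + \<beta> k \<ge> 2" "\<alpha> k \<noteq> \<beta> k" by blast
  have "(if \<alpha> k = \<beta> k then 0 else \<alpha> k + \<beta> k) \<le> unbalanced_deg n \<alpha> \<beta>"
    unfolding unbalanced_deg_def by (rule member_le_sum) (use k in auto)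
  then show ?thesis using k by simp
next
  assume "\<exists>k<n. \<exists>k'<n. k \<noteq> k' \<and> \<alpha> k + \<beta> k = 1 \<and> \<alpha> k' + \<beta> k' = 1"
  then obtain k k' where k: "k < n" "k' < n" "k \<noteq> k'" "\<alpha> k + \<beta> k = 1" "\<alpha> k' + \<beta> k' = 1" by blast
  have "(\<Sum>j\<in>{k, k'}. if \<alpha> j = \<beta> j then 0 else \<alpha> j + \<beta> j) \<le> unbalanced_deg n \<alpha> \<beta>"
    unfolding unbalanced_deg_def by (rule sum_mono2) (use k in auto)
  moreover have "\<alpha> k \<noteq> \<beta> k" "\<alpha> k' \<noteq> \<beta> k'" using k by arith+
  ultimately show ?thesis using k by simp
qed

lemma unbalanced_deg_le: "unbalanced_deg n \<alpha> \<beta> \<le> mono_deg_below n (\<alpha>, \<beta>)"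
  unfolding unbalanced_deg_def mono_deg_below_def by (rule sum_mono) auto

lemma symbol_inv_initial:
  assumes below: "(\<alpha>, \<beta>) \<in> monos_below n" and unb: "2 \<le> unbalanced_deg n \<alpha> \<beta>"
  shows "symbol_inv n (\<lambda>j. int (\<alpha> j) - int (\<beta> j)) (\<lambda>j. \<alpha> j - \<beta> j) (\<lambda>j. \<beta> j - \<alpha> j)
    (wbasis (\<alpha>, \<beta>)) (wbasis (\<beta>, \<alpha>))"
proof -
  define \<delta> where "\<delta> = (\<lambda>j. int (\<alpha> j) - int (\<beta> j))"
  define xp where "xp = (\<lambda>j. \<alpha> j - \<beta> j)"
  define xm where "xm = (\<lambda>j. \<beta> j - \<alpha> j)"
  define \<mu> where "\<mu> = (\<lambda>j. min (\<alpha> j) (\<beta> j))"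
  have wsb: "wsupp (wbasis x) = {x}" for x by (auto simp: wsupp_def wbasis_def)
  have "degree (factor_prod n \<delta> (\<lambda>j. xp j + xm j) * factor_prod n \<delta> (\<lambda>j. \<alpha> j - xp j)
      * factor_prod n \<delta> (\<lambda>j. \<beta> j - xm j)) = degree (factor_prod n \<delta> (\<lambda>j. xp j + xm j))
      + degree (factor_prod n \<delta> (\<lambda>j. \<alpha> j - xp j)) + degree (factor_prod n \<delta> (\<lambda>j. \<beta> j - xm j))"
    by (simp add: degree_mult_eq factor_prod_nonzero)
  also have "\<dots> = unbalanced_deg n \<alpha> \<beta>"
    unfolding degree_factor_prod unbalanced_deg_def sum.distrib[symmetric]
    by (rule sum.cong) (auto simp: \<delta>_def xp_def xm_def)
  finally have "2 \<le> degree (factor_prod n \<delta> (\<lambda>j. xp j + xm j) * factor_prod n \<delta> (\<lambda>j. \<alpha> j - xp j)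
      * factor_prod n \<delta> (\<lambda>j. \<beta> j - xm j))" using unb by simp
  moreover have "shifted xp xm (wbasis (\<alpha>, \<beta>))" "shifted xm xp (wbasis (\<beta>, \<alpha>))"
    unfolding shifted_def wsb
    by (auto intro!: exI[where x=\<mu>] simp: xp_def xm_def \<mu>_def fun_eq_iff)
  moreover have "supported n (wbasis (\<alpha>, \<beta>))" "supported n (wbasis (\<beta>, \<alpha>))"
    using below by (auto simp: supported_def wsb monos_below_def)
  ultimately have "symbol_inv n \<delta> xp xm (wbasis (\<alpha>, \<beta>)) (wbasis (\<beta>, \<alpha>))"
    using factor_prod_nonzero unfolding symbol_inv_def symbol_poly_wbasis by auto
  then show ?thesis by (simp only: \<delta>_def xp_def xm_def)
qed

theorem proposition9:
  fixes n :: nat and \<alpha> \<beta> :: "nat \<Rightarrow> nat"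
  assumes "n \<ge> 1"
    and "\<forall>j\<ge>n. \<alpha> j = 0 \<and> \<beta> j = 0"
    and "lex_ge n \<alpha> \<beta>"
    and "(\<exists>k<n. \<alpha> k + \<beta> k \<ge> 2 \<and> \<alpha> k \<noteq> \<beta> k) \<or>
         (\<exists>k<n. \<exists>k'<n. k \<noteq> k' \<and> \<alpha> k + \<beta> k = 1 \<and> \<alpha> k' + \<beta> k' = 1)"
  shows "\<forall>l. \<forall>y \<in> {fst (chain2 (gplus (\<alpha>, \<beta>)) (gminus (\<alpha>, \<beta>)) l),
                    snd (chain2 (gplus (\<alpha>, \<beta>)) (gminus (\<alpha>, \<beta>)) l)}.
           wdeg y = ereal (3 ^ l * (real (\<Sum>j<n. \<alpha> j + \<beta> j) - 2) + 2)"
proof -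
  define d where "d = mono_deg_below n (\<alpha>, \<beta>)"
  have below: "(\<alpha>, \<beta>) \<in> monos_below n" using assms(2) by (simp add: monos_below_def)
  have unb: "2 \<le> unbalanced_deg n \<alpha> \<beta>" using assms(4) by (rule two_le_unbalanced_deg)
  have "\<exists>k. \<alpha> k \<noteq> \<beta> k"
  proof (rule ccontr)
    assume "\<nexists>k. \<alpha> k \<noteq> \<beta> k"
    then have "unbalanced_deg n \<alpha> \<beta> = 0" by (simp add: unbalanced_deg_def)
    with unb show False by simp
  qed
  then obtain k where k: "int (\<alpha> k) - int (\<beta> k) \<noteq> 0" by auto
  have sd: "int (\<alpha> j - \<beta> j) - int (\<beta> j - \<alpha> j) = int (\<alpha> j) - int (\<beta> j)" for j
    by linarith
  have d2: "2 \<le> d" using unb unbalanced_deg_le order_trans unfolding d_def by blast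
  have "wdeg y = ereal (real (3 ^ l * (d - 2) + 2))"
    if "y \<in> {fst (chain2 (gplus (\<alpha>, \<beta>)) (gminus (\<alpha>, \<beta>)) l),
              snd (chain2 (gplus (\<alpha>, \<beta>)) (gminus (\<alpha>, \<beta>)) l)}" for l y
    using that wdeg_chain2[OF leading_parts_initial[OF below] _ symbol_inv_initial[OF below unb]
        sd k] d2
    unfolding d_def by blast
  moreover have "real (3 ^ l * (d - 2) + 2) = 3 ^ l * (real (\<Sum>j<n. \<alpha> j + \<beta> j) - 2) + 2" for l
    using d2 by (simp add: d_def mono_deg_below_def of_nat_diff)
  ultimately show ?thesis by simp
qed

end
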